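(* Let $E: y^2=x^3+Ax^2+Bx$ ($A,B\in\mathbb{Z}$) with $E(\mathbb{Q})[2]\simeq\mathbb{Z}/2\mathbb{Z}$, let $d$ be squarefree and $p$ a prime with $p\mid d$ and $\gcd(p,2\Delta)=1$. Then $$W_p^d=\begin{cases}\langle d(A+2\sqrt{B})\rangle & \text{if } p \text{ is of type 1},\\ 1 & \text{if } p \text{ is of type 2},\\ \mathbb{Q}_p^\times/(\mathbb{Q}_p^\times)^2 & \text{if } p \text{ is of type 3},\\ \mathbb{Z}_p^\times/(\mathbb{Z}_p^\times)^2 & \text{if } p \text{ is of type 4}.\end{cases}$$
   Context: $\Delta$ is the discriminant of $E$ and $\Delta'$ that of $E': y^2=x^3-2Ax^2+(A^2-4B)x$ (up to squares $\Delta\equiv A^2-4B$, $\Delta'\equiv B$). $\phi:E\to E'$ is the 2-isogeny with kernel $\langle(0,0)\rangle$, $E^d,E'^d$ the quadratic twists by $d$, and $W_p^d=\kappa_p(E'^d(\mathbb{Q}_p)/\phi(E^d(\mathbb{Q}_p)))\subset\mathbb{Q}_p^\times/(\mathbb{Q}_p^\times)^2$ is the image of the local Kummer map. For a prime $p\nmid 2\Delta$: $p$ is of type 1 if $(\Delta/p)=1,(\Delta'/p)=1$; type 2 if $(\Delta/p)=1,(\Delta'/p)=-1$; type 3 if $(\Delta/p)=-1,(\Delta'/p)=1$; type 4 if $(\Delta/p)=-1,(\Delta'/p)=-1$. In type 1, $\sqrt{B}\in\mathbb{Q}_p$. *)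

theory Defs
  imports Complex_Main "HOL-Number_Theory.Number_Theory" "HOL-Computational_Algebra.Squarefree"
begin

definition padic_val_rat :: "nat \<Rightarrow> rat \<Rightarrow> int" where
  "padic_val_rat p q = (case quotient_of q of (a, b) \<Rightarrow>
      int (multiplicity (int p) a) - int (multiplicity (int p) b))"

definition padic_abs :: "nat \<Rightarrow> rat \<Rightarrow> real" where
  "padic_abs p q = (if q = 0 then 0 else real p powr (- real_of_int (padic_val_rat p q)))"

text \<open>Elements of Q_p are represented by p-adic Cauchy sequences of rationals;
  two representatives give the same element iff their difference is p-adically null.\<close>
definition padic_cauchy :: "nat \<Rightarrow> (nat \<Rightarrow> rat) \<Rightarrow> bool" where
  "padic_cauchy p X \<longleftrightarrow>
     (\<forall>e>0. \<exists>N. \<forall>m\<ge>N. \<forall>n\<ge>N. padic_abs p (X m - X n) < e)"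

definition padic_null :: "nat \<Rightarrow> (nat \<Rightarrow> rat) \<Rightarrow> bool" where
  "padic_null p X \<longleftrightarrow> (\<forall>e>0. \<exists>N. \<forall>n\<ge>N. padic_abs p (X n) < e)"

definition Qp_eq :: "nat \<Rightarrow> (nat \<Rightarrow> rat) \<Rightarrow> (nat \<Rightarrow> rat) \<Rightarrow> bool" where
  "Qp_eq p X Y \<longleftrightarrow> padic_null p (\<lambda>n. X n - Y n)"

definition Qp_units :: "nat \<Rightarrow> (nat \<Rightarrow> rat) set" where
  "Qp_units p = {X. padic_cauchy p X \<and> \<not> padic_null p X}"

definition Zp_units :: "nat \<Rightarrow> (nat \<Rightarrow> rat) set" where
  "Zp_units p = {X. padic_cauchy p X \<and> (\<exists>N. \<forall>n\<ge>N. padic_abs p (X n) = 1)}"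

definition Qp_const :: "rat \<Rightarrow> nat \<Rightarrow> rat" where
  "Qp_const c = (\<lambda>n. c)"

definition sq_equiv :: "nat \<Rightarrow> (nat \<Rightarrow> rat) \<Rightarrow> (nat \<Rightarrow> rat) \<Rightarrow> bool" where
  "sq_equiv p X Y \<longleftrightarrow> X \<in> Qp_units p \<and> Y \<in> Qp_units p \<and>
     (\<exists>Z \<in> Qp_units p. Qp_eq p X (\<lambda>n. Y n * (Z n)\<^sup>2))"

definition disc :: "int \<Rightarrow> int \<Rightarrow> int" where
  "disc a b = 16 * b\<^sup>2 * (a\<^sup>2 - 4 * b)"

definition Qp_affine_points :: "nat \<Rightarrow> rat \<Rightarrow> rat \<Rightarrow> ((nat \<Rightarrow> rat) \<times> (nat \<Rightarrow> rat)) set" where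
  "Qp_affine_points p a b = {(X, Y). padic_cauchy p X \<and> padic_cauchy p Y \<and>
      Qp_eq p (\<lambda>n. (Y n)\<^sup>2) (\<lambda>n. (X n)^3 + a * (X n)\<^sup>2 + b * X n)}"

text \<open>Image (as a set of representatives in Q_p^x, closed under the square class relation)
  of the Kummer map E'(Q_p) \<rightarrow> Q_p^x/(Q_p^x)^2 attached to the 2-isogeny
  phi : (y^2 = x^3 + a x^2 + b x) \<rightarrow> E' : (y^2 = x^3 - 2a x^2 + (a^2-4b) x).
  The map sends O to 1, (0,0) to a^2 - 4b, and (x,y) with x \<noteq> 0 to x.\<close>
definition kummer_image :: "nat \<Rightarrow> rat \<Rightarrow> rat \<Rightarrow> (nat \<Rightarrow> rat) set" where
  "kummer_image p a b =
     {u \<in> Qp_units p. sq_equiv p u (Qp_const 1)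
        \<or> sq_equiv p u (Qp_const (a\<^sup>2 - 4 * b))
        \<or> (\<exists>(X, Y) \<in> Qp_affine_points p (-2 * a) (a\<^sup>2 - 4 * b).
              \<not> padic_null p X \<and> sq_equiv p u X)}"

text \<open>W_p^d: the image of the local Kummer map for the twisted isogeny
  phi^d : E^d \<rightarrow> E'^d, with E^d : y^2 = x^3 + dA x^2 + d^2 B x
  (isomorphic to d y^2 = x^3 + A x^2 + B x) and
  E'^d : y^2 = x^3 - 2dA x^2 + d^2 (A^2-4B) x.\<close>
definition W :: "int \<Rightarrow> int \<Rightarrow> int \<Rightarrow> nat \<Rightarrow> (nat \<Rightarrow> rat) set" where
  "W A B d p = kummer_image p (of_int (d * A)) (of_int (d\<^sup>2 * B))"

end

theory Submission
  imports Defs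
begin

text \<open>For odd p a class in Q_p^x/(Q_p^x)^2 is determined by the parity of the valuation and the
  quadratic character of the residue of the unit part (Hensel's lemma).  W_p^d is made of the classes
  of 1, of a^2 - 4b = d^2 (A^2 - 4B) (the image of (0,0)) and of x for points (x, y) of E'^d(Q_p), where
  a = dA and b = d^2 B are divisible by p exactly once and twice.  Comparing valuations in
  y^2 = x ((x - a)^2 - 4b): if v(x) \<noteq> 1 then v(x) is even and x has residue class 1 or (D/p),
  D = A^2 - 4B; if v(x) = 1 then necessarily x ~ d(A \<plusminus> 2 sqrt B), which requires B to be a square
  mod p, and then x is in the class of one of the 2-torsion points d(A \<plusminus> 2 sqrt B), whose residue
  characters multiply to (D/p).  Listing, for each of the four types, which of the four classes
  (parity of v, residue character) occur gives the result.\<close>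

locale odd_prime =
  fixes p :: nat
  assumes prime: "prime p" and gt_2: "p > 2"
begin

abbreviation P :: int where "P \<equiv> int p"
abbreviation val :: "rat \<Rightarrow> int" where "val \<equiv> padic_val_rat p"

lemma prime_P: "prime P"
  using prime by simp

lemma not_unit_P: "\<not> is_unit P"
  using prime_P not_prime_unit by blast

lemma not_dvd_mult: "\<not> P dvd x \<Longrightarrow> \<not> P dvd y \<Longrightarrow> \<not> P dvd x * y"
  using prime_P by (simp add: prime_dvd_mult_iff)

lemma not_dvd_power: "\<not> P dvd x \<Longrightarrow> \<not> P dvd x ^ n"
  using prime_P prime_dvd_power_int by blast

lemma not_dvd_2: "\<not> P dvd 2"
  using gt_2 by (auto dest: zdvd_imp_le)

lemma not_dvd_4: "\<not> P dvd 4"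
  using not_dvd_power[OF not_dvd_2, of 2] by simp

lemma not_dvd_2_power: "\<not> P dvd 2 ^ n"
  using not_dvd_power[OF not_dvd_2] .

lemma multiplicity_eq_0_iff: "b \<noteq> 0 \<Longrightarrow> multiplicity P b = 0 \<longleftrightarrow> \<not> P dvd b"
  using multiplicity_eq_zero_iff[of b P] not_unit_P by blast

lemma val_of_int_div:
  assumes "a \<noteq> 0" "b \<noteq> 0"
  shows "val (of_int a / of_int b) = int (multiplicity P a) - int (multiplicity P b)"
proof -
  obtain n e where q: "quotient_of (of_int a / of_int b) = (n, e)"
    by (cases "quotient_of (of_int a / of_int b :: rat)")
  have e: "e > 0" using quotient_of_denom_pos[OF q] .
  have qe: "(of_int a / of_int b :: rat) = of_int n / of_int e" using quotient_of_div[OF q] .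
  then have n: "n \<noteq> 0" using assms e by auto
  from qe have "a * e = n * b" using assms e
    by (simp add: field_simps) (metis of_int_eq_iff of_int_mult)
  then have "multiplicity P a + multiplicity P e = multiplicity P n + multiplicity P b"
    using prime_elem_multiplicity_mult_distrib[of P] prime_P assms e n
    by (metis less_irrefl prime_imp_prime_elem)
  then show ?thesis unfolding padic_val_rat_def q by simp
qed

lemma val_of_int: "a \<noteq> 0 \<Longrightarrow> val (of_int a) = int (multiplicity P a)"
  using val_of_int_div[of a 1] by simp

lemma val_of_int_eq_0: "\<not> P dvd b \<Longrightarrow> val (of_int b) = 0"
  using val_of_int[of b] multiplicity_eq_0_iff[of b] by (cases "b = 0") auto

lemma rat_int_fraction:
  fixes q :: rat
  obtains a b where "q = of_int a / of_int b" "b \<noteq> 0" "q \<noteq> 0 \<Longrightarrow> a \<noteq> 0"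
proof -
  obtain n e where q: "quotient_of q = (n, e)" by (cases "quotient_of q")
  show ?thesis using that[of n e] quotient_of_div[OF q] quotient_of_denom_pos[OF q] by auto
qed

lemma val_mult: assumes "x \<noteq> 0" "y \<noteq> 0" shows "val (x * y) = val x + val y"
proof -
  obtain a b where x: "x = of_int a / of_int b" "b \<noteq> 0" "a \<noteq> 0"
    using rat_int_fraction assms by metis
  obtain c e where y: "y = of_int c / of_int e" "e \<noteq> 0" "c \<noteq> 0"
    using rat_int_fraction assms by metis
  have "x * y = of_int (a * c) / of_int (b * e)" using x y by simp
  then have "val (x * y) = int (multiplicity P (a * c)) - int (multiplicity P (b * e))"
    using val_of_int_div[of "a * c" "b * e"] x y by simp
  then show ?thesis
    using x y val_of_int_div prime_elem_multiplicity_mult_distrib[of P] prime_P by simp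
qed

lemma val_1 [simp]: "val 1 = 0"
  using val_of_int[of 1] by simp

lemma val_inverse: "x \<noteq> 0 \<Longrightarrow> val (inverse x) = - val x"
  using val_mult[of x "inverse x"] by simp

lemma val_divide: "x \<noteq> 0 \<Longrightarrow> y \<noteq> 0 \<Longrightarrow> val (x / y) = val x - val y"
  using val_mult[of x "inverse y"] val_inverse[of y] by (simp add: divide_inverse)

lemma val_power: "x \<noteq> 0 \<Longrightarrow> val (x ^ n) = int n * val x"
  by (induction n) (auto simp: val_mult algebra_simps)

lemma val_p: "val (of_nat p) = 1"
  using val_of_int[of P] multiplicity_prime[of P] prime_P prime by simp

lemma val_uminus: "val (- x) = val x"
proof (cases "x = 0")
  case False
  then show ?thesis using val_mult[of "-1" x] val_of_int[of "-1"] by simp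
qed simp

lemma val_add_ge:
  assumes "x \<noteq> 0" "y \<noteq> 0" "x + y \<noteq> 0"
  shows "val (x + y) \<ge> min (val x) (val y)"
proof -
  obtain a b where x: "x = of_int a / of_int b" "b \<noteq> 0" "a \<noteq> 0"
    using rat_int_fraction assms by metis
  obtain c e where y: "y = of_int c / of_int e" "e \<noteq> 0" "c \<noteq> 0"
    using rat_int_fraction assms by metis
  let ?m = "\<lambda>z. int (multiplicity P z)"
  have m_mult: "?m (z * w) = ?m z + ?m w" if "z \<noteq> 0" "w \<noteq> 0" for z w
    using prime_elem_multiplicity_mult_distrib[of P z w] prime_P that by simp
  have xy: "x + y = of_int (a * e + c * b) / of_int (b * e)"
    using x y by (simp add: field_simps)
  then have s: "a * e + c * b \<noteq> 0" using assms(3) by (metis div_0 of_int_0)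
  define m where "m = min (multiplicity P (a * e)) (multiplicity P (c * b))"
  have "P ^ m dvd a * e" "P ^ m dvd c * b"
    unfolding m_def using multiplicity_dvd'[of _ P] by auto
  then have "P ^ m dvd a * e + c * b" by simp
  then have "int m \<le> ?m (a * e + c * b)"
    using multiplicity_geI[OF s not_unit_P] by simp
  moreover have "int m = min (?m a + ?m e) (?m c + ?m b)"
    unfolding m_def using m_mult[of a e] m_mult[of c b] x y by linarith
  moreover have "val (x + y) = ?m (a * e + c * b) - ?m (b * e)"
    using xy val_of_int_div[OF s, of "b * e"] x y by simp
  moreover have "?m (b * e) = ?m b + ?m e" using m_mult x y by simp
  moreover have "val x = ?m a - ?m b" "val y = ?m c - ?m e"
    using x y val_of_int_div by auto
  ultimately show ?thesis by linarith
qed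

text \<open>val_ge x k says that p^k divides x in Z_(p); it holds for x = 0, whose valuation is junk.\<close>
definition val_ge :: "rat \<Rightarrow> int \<Rightarrow> bool" where
  "val_ge x k \<longleftrightarrow> x = 0 \<or> k \<le> val x"

lemma val_ge_0 [simp]: "val_ge 0 k"
  by (simp add: val_ge_def)

lemma val_ge_uminus [simp]: "val_ge (- x) k = val_ge x k"
  by (simp add: val_ge_def val_uminus)

lemma val_ge_add: "val_ge x k \<Longrightarrow> val_ge y k \<Longrightarrow> val_ge (x + y) k"
  using val_add_ge[of x y] by (fastforce simp: val_ge_def)

lemma val_ge_diff: "val_ge x k \<Longrightarrow> val_ge y k \<Longrightarrow> val_ge (x - y) k"
  using val_ge_add[of x k "-y"] by simp

lemma val_ge_mono: "val_ge x k \<Longrightarrow> j \<le> k \<Longrightarrow> val_ge x j"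
  by (auto simp: val_ge_def)

lemma val_ge_mult: "val_ge x k \<Longrightarrow> val_ge y j \<Longrightarrow> val_ge (x * y) (k + j)"
  by (cases "x = 0"; cases "y = 0") (auto simp: val_ge_def val_mult)

lemma val_ge_of_int_iff: "val_ge (of_int a) (int k) \<longleftrightarrow> P ^ k dvd a"
  using val_of_int[of a] power_dvd_iff_le_multiplicity[of a P k] not_unit_P
  by (cases "a = 0") (auto simp: val_ge_def)

lemma val_ge_of_int: "val_ge (of_int a) 0"
  using val_ge_of_int_iff[of a 0] by simp

lemma val_ge_1_mult_cases:
  assumes "val_ge x 0" "val_ge y 0" "val_ge (x * y) 1"
  shows "val_ge x 1 \<or> val_ge y 1"
proof (rule ccontr)
  assume "\<not> ?thesis"
  then have "x \<noteq> 0" "y \<noteq> 0" "val x = 0" "val y = 0" using assms(1,2) by (auto simp: val_ge_def)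
  then show False using assms(3) val_mult[of x y] by (simp add: val_ge_def)
qed

lemma val_ge_div_of_int:
  assumes "\<not> P dvd b" shows "val_ge (x / of_int b) k \<longleftrightarrow> val_ge x k"
proof -
  have "b \<noteq> 0" using assms by auto
  then show ?thesis
    using val_of_int_eq_0[OF assms] val_divide[of x "of_int b"] by (cases "x = 0") (auto simp: val_ge_def)
qed

lemma val_add_eq:
  assumes "x \<noteq> 0" "val_ge y (val x + 1)"
  shows "x + y \<noteq> 0" "val (x + y) = val x"
proof -
  show xy: "x + y \<noteq> 0"
  proof
    assume "x + y = 0"
    then have "y = - x" by (simp add: add_eq_0_iff)
    then show False using assms by (simp add: val_ge_def val_uminus)
  qed
  have "val_ge (x + y) (val x)"
    using val_ge_add[of x "val x" y] assms val_ge_mono[of y "val x + 1" "val x"] by (simp add: val_ge_def)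
  moreover have "\<not> val_ge (x + y) (val x + 1)"
    using val_ge_diff[of "x + y" "val x + 1" y] assms by (auto simp: val_ge_def)
  ultimately show "val (x + y) = val x" using xy by (simp add: val_ge_def)
qed


definition is_null :: "(nat \<Rightarrow> rat) \<Rightarrow> bool" where
  "is_null X \<longleftrightarrow> (\<forall>k. \<forall>\<^sub>F n in sequentially. val_ge (X n) k)"

definition is_cauchy :: "(nat \<Rightarrow> rat) \<Rightarrow> bool" where
  "is_cauchy X \<longleftrightarrow> (\<forall>k. \<exists>N. \<forall>m\<ge>N. \<forall>n\<ge>N. val_ge (X m - X n) k)"

definition val_bounded :: "(nat \<Rightarrow> rat) \<Rightarrow> bool" where
  "val_bounded X \<longleftrightarrow> (\<exists>j. \<forall>\<^sub>F n in sequentially. val_ge (X n) j)"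

lemma padic_abs_less_iff: "padic_abs p q < real p powr (- real_of_int k) \<longleftrightarrow> val_ge q (k + 1)"
proof (cases "q = 0")
  case False
  then have "padic_abs p q < real p powr (- real_of_int k) \<longleftrightarrow> - real_of_int (val q) < - real_of_int k"
    using gt_2 by (simp add: padic_abs_def)
  then show ?thesis using False by (auto simp: val_ge_def)
qed (use gt_2 in \<open>simp add: padic_abs_def\<close>)

lemma ex_powr_less: assumes "e > 0" shows "\<exists>k::int. real p powr (- real_of_int k) < e"
proof -
  obtain n where n: "1 / e < real p ^ n" using real_arch_pow[of "real p"] gt_2 by auto
  have "real p powr (- real_of_int (int n)) = 1 / real p ^ n"
    using gt_2 by (simp add: powr_minus powr_realpow divide_inverse)
  also have "\<dots> < e" using n assms gt_2 by (simp add: field_simps)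
  finally show ?thesis by blast
qed

lemma padic_null_iff: "padic_null p X \<longleftrightarrow> is_null X"
proof
  assume h: "padic_null p X"
  show "is_null X" unfolding is_null_def eventually_sequentially
  proof
    fix k :: int
    have "real p powr (- real_of_int (k - 1)) > 0" using gt_2 by simp
    then obtain N where "\<forall>n\<ge>N. padic_abs p (X n) < real p powr (- real_of_int (k - 1))"
      using h unfolding padic_null_def by blast
    then show "\<exists>N. \<forall>n\<ge>N. val_ge (X n) k" using padic_abs_less_iff[of _ "k - 1"] by auto
  qed
next
  assume h: "is_null X"
  show "padic_null p X" unfolding padic_null_def
  proof (intro allI impI)
    fix e :: real assume "e > 0"
    then obtain k where k: "real p powr (- real_of_int k) < e" using ex_powr_less by blast
    obtain N where "\<forall>n\<ge>N. val_ge (X n) (k + 1)" using h unfolding is_null_def eventually_sequentially by blast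
    then show "\<exists>N. \<forall>n\<ge>N. padic_abs p (X n) < e" using padic_abs_less_iff[of _ k] k by (meson less_trans)
  qed
qed

lemma padic_cauchy_iff: "padic_cauchy p X \<longleftrightarrow> is_cauchy X"
proof
  assume h: "padic_cauchy p X"
  show "is_cauchy X" unfolding is_cauchy_def
  proof
    fix k :: int
    have "real p powr (- real_of_int (k - 1)) > 0" using gt_2 by simp
    then obtain N where "\<forall>m\<ge>N. \<forall>n\<ge>N. padic_abs p (X m - X n) < real p powr (- real_of_int (k - 1))"
      using h unfolding padic_cauchy_def by blast
    then show "\<exists>N. \<forall>m\<ge>N. \<forall>n\<ge>N. val_ge (X m - X n) k" using padic_abs_less_iff[of _ "k - 1"] by auto
  qed
next
  assume h: "is_cauchy X"
  show "padic_cauchy p X" unfolding padic_cauchy_def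
  proof (intro allI impI)
    fix e :: real assume "e > 0"
    then obtain k where k: "real p powr (- real_of_int k) < e" using ex_powr_less by blast
    obtain N where "\<forall>m\<ge>N. \<forall>n\<ge>N. val_ge (X m - X n) (k + 1)" using h unfolding is_cauchy_def by blast
    then show "\<exists>N. \<forall>m\<ge>N. \<forall>n\<ge>N. padic_abs p (X m - X n) < e"
      using padic_abs_less_iff[of _ k] k by (meson less_trans)
  qed
qed

lemma Qp_units_iff: "X \<in> Qp_units p \<longleftrightarrow> is_cauchy X \<and> \<not> is_null X"
  by (simp add: Qp_units_def padic_null_iff padic_cauchy_iff)

lemma Qp_eq_iff: "Qp_eq p X Y \<longleftrightarrow> is_null (\<lambda>n. X n - Y n)"
  by (simp add: Qp_eq_def padic_null_iff)

lemma null_uminus: "is_null X \<Longrightarrow> is_null (\<lambda>n. - X n)"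
  by (simp add: is_null_def)

lemma null_eventually_cong: "is_null X \<Longrightarrow> \<forall>\<^sub>F n in sequentially. X n = Y n \<Longrightarrow> is_null Y"
  unfolding is_null_def by (auto elim: eventually_elim2)

lemma null_mult_bounded: "is_null X \<Longrightarrow> val_bounded Y \<Longrightarrow> is_null (\<lambda>n. X n * Y n)"
  unfolding is_null_def val_bounded_def
proof (intro allI)
  fix k assume "\<forall>k. \<forall>\<^sub>F n in sequentially. val_ge (X n) k" "\<exists>j. \<forall>\<^sub>F n in sequentially. val_ge (Y n) j"
  then obtain j where "\<forall>\<^sub>F n in sequentially. val_ge (X n) (k - j)" "\<forall>\<^sub>F n in sequentially. val_ge (Y n) j"
    by blast
  then show "\<forall>\<^sub>F n in sequentially. val_ge (X n * Y n) k"
    by eventually_elim (use val_ge_mult[of _ "k - j" _ j] in simp)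
qed

lemma bounded_const: "val_bounded (\<lambda>n. c)"
  unfolding val_bounded_def by (cases "c = 0") (auto simp: val_ge_def intro!: exI[of _ "val c"])

lemma bounded_mult: "val_bounded X \<Longrightarrow> val_bounded Y \<Longrightarrow> val_bounded (\<lambda>n. X n * Y n)"
  unfolding val_bounded_def by (blast intro: eventually_elim2 val_ge_mult)

lemma cauchy_bounded: assumes "is_cauchy X" shows "val_bounded X"
proof -
  obtain N where N: "\<forall>m\<ge>N. \<forall>n\<ge>N. val_ge (X m - X n) 0" using assms unfolding is_cauchy_def by blast
  define j where "j = (if X N = 0 then 0 else min 0 (val (X N)))"
  have j: "val_ge (X N) j" "j \<le> 0" unfolding j_def val_ge_def by auto
  have "val_ge (X N + (X n - X N)) j" if "n \<ge> N" for n
    using N that j val_ge_add val_ge_mono[of "X n - X N" 0 j] by blast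
  then show ?thesis unfolding val_bounded_def eventually_sequentially by auto
qed

lemma cauchy_const: "is_cauchy (\<lambda>n. c)"
  unfolding is_cauchy_def by simp

lemma cauchy_add: "is_cauchy X \<Longrightarrow> is_cauchy Y \<Longrightarrow> is_cauchy (\<lambda>n. X n + Y n)"
  unfolding is_cauchy_def
proof (intro allI)
  fix k
  assume "\<forall>k. \<exists>N. \<forall>m\<ge>N. \<forall>n\<ge>N. val_ge (X m - X n) k" "\<forall>k. \<exists>N. \<forall>m\<ge>N. \<forall>n\<ge>N. val_ge (Y m - Y n) k"
  then obtain N1 N2 where "\<forall>m\<ge>N1. \<forall>n\<ge>N1. val_ge (X m - X n) k" "\<forall>m\<ge>N2. \<forall>n\<ge>N2. val_ge (Y m - Y n) k"
    by blast
  then have "val_ge (X m + Y m - (X n + Y n)) k" if "m \<ge> max N1 N2" "n \<ge> max N1 N2" for m n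
    using val_ge_add[of "X m - X n" k "Y m - Y n"] that by (simp add: algebra_simps)
  then show "\<exists>N. \<forall>m\<ge>N. \<forall>n\<ge>N. val_ge (X m + Y m - (X n + Y n)) k" by blast
qed

lemma cauchy_uminus: "is_cauchy X \<Longrightarrow> is_cauchy (\<lambda>n. - X n)"
  unfolding is_cauchy_def by (metis minus_diff_minus val_ge_uminus)

lemma cauchy_mult: assumes "is_cauchy X" "is_cauchy Y" shows "is_cauchy (\<lambda>n. X n * Y n)"
  unfolding is_cauchy_def
proof
  fix k
  obtain j1 N1 where b1: "\<forall>n\<ge>N1. val_ge (X n) j1"
    using cauchy_bounded[OF assms(1)] unfolding val_bounded_def eventually_sequentially by blast
  obtain j2 N2 where b2: "\<forall>n\<ge>N2. val_ge (Y n) j2"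
    using cauchy_bounded[OF assms(2)] unfolding val_bounded_def eventually_sequentially by blast
  obtain M1 where c1: "\<forall>m\<ge>M1. \<forall>n\<ge>M1. val_ge (X m - X n) (k - j2)" using assms(1) unfolding is_cauchy_def by blast
  obtain M2 where c2: "\<forall>m\<ge>M2. \<forall>n\<ge>M2. val_ge (Y m - Y n) (k - j1)" using assms(2) unfolding is_cauchy_def by blast
  define N where "N = max (max N1 N2) (max M1 M2)"
  have "val_ge (X m * Y m - X n * Y n) k" if "m \<ge> N" "n \<ge> N" for m n
  proof -
    have "val_ge (X m * (Y m - Y n)) (j1 + (k - j1))" "val_ge ((X m - X n) * Y n) ((k - j2) + j2)"
      using val_ge_mult b1 b2 c1 c2 that unfolding N_def by (meson max.boundedE)+
    then have "val_ge (X m * (Y m - Y n) + (X m - X n) * Y n) k" using val_ge_add by simp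
    then show ?thesis by (simp add: algebra_simps)
  qed
  then show "\<exists>N. \<forall>m\<ge>N. \<forall>n\<ge>N. val_ge (X m * Y m - X n * Y n) k" by blast
qed

lemma unit_val_eventually_const:
  assumes "is_cauchy X" "\<not> is_null X"
  obtains k where "\<forall>\<^sub>F n in sequentially. X n \<noteq> 0 \<and> val (X n) = k"
proof -
  obtain K where K: "\<forall>N. \<exists>n\<ge>N. \<not> val_ge (X n) K"
    using assms(2) unfolding is_null_def eventually_sequentially by blast
  obtain N where N: "\<forall>m\<ge>N. \<forall>n\<ge>N. val_ge (X m - X n) K" using assms(1) unfolding is_cauchy_def by blast
  obtain n0 where n0: "n0 \<ge> N" "\<not> val_ge (X n0) K" using K by blast
  have nz: "X n0 \<noteq> 0" "val (X n0) < K" using n0 by (auto simp: val_ge_def)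
  have "X n \<noteq> 0 \<and> val (X n) = val (X n0)" if "n \<ge> N" for n
  proof -
    have "val_ge (X n - X n0) (val (X n0) + 1)" using N that n0 val_ge_mono[of _ K] nz by simp
    then show ?thesis using val_add_eq[OF nz(1), of "X n - X n0"] by simp
  qed
  then show ?thesis using that unfolding eventually_sequentially by blast
qed

lemma not_null_eventually_val:
  assumes "\<forall>\<^sub>F n in sequentially. X n \<noteq> 0 \<and> val (X n) = k"
  shows "\<not> is_null X"
proof
  assume "is_null X"
  then have "\<forall>\<^sub>F n in sequentially. val_ge (X n) (k + 1)" unfolding is_null_def by blast
  with assms have "\<forall>\<^sub>F n in sequentially. False" by eventually_elim (simp add: val_ge_def)
  then show False by simp
qed

lemma cauchy_inverse: assumes "is_cauchy Y" "\<not> is_null Y" shows "is_cauchy (\<lambda>n. inverse (Y n))"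
  unfolding is_cauchy_def
proof
  fix K
  obtain k N where kN: "\<forall>n\<ge>N. Y n \<noteq> 0 \<and> val (Y n) = k"
    using unit_val_eventually_const[OF assms] unfolding eventually_sequentially by metis
  obtain M where M: "\<forall>m\<ge>M. \<forall>n\<ge>M. val_ge (Y m - Y n) (K + 2 * k)" using assms(1) unfolding is_cauchy_def by blast
  have "val_ge (inverse (Y m) - inverse (Y n)) K" if "m \<ge> max N M" "n \<ge> max N M" for m n
  proof -
    have h: "Y m \<noteq> 0" "Y n \<noteq> 0" "val (Y m) = k" "val (Y n) = k" "val_ge (Y n - Y m) (K + 2 * k)"
      using kN M that by auto
    have "inverse (Y m) - inverse (Y n) = (Y n - Y m) * inverse (Y m * Y n)" using h by (simp add: field_simps)
    moreover have "val_ge (inverse (Y m * Y n)) (- 2 * k)" using h val_inverse val_mult by (simp add: val_ge_def)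
    ultimately show ?thesis using val_ge_mult[OF h(5), of _ "- 2 * k"] by simp
  qed
  then show "\<exists>N. \<forall>m\<ge>N. \<forall>n\<ge>N. val_ge (inverse (Y m) - inverse (Y n)) K" by blast
qed


lemma P_gt_2: "P > 2"
  using gt_2 by simp

lemma Legendre_values: "Legendre x P \<in> {-1, 0, 1}"
  by (simp add: Legendre_def)

lemma cong_imp_eq_small:
  assumes "a \<in> {-1, 0, 1::int}" "b \<in> {-1, 0, 1}" "[a = b] (mod P)"
  shows "a = b"
proof (rule ccontr)
  assume "a \<noteq> b"
  then have "a - b \<noteq> 0" by simp
  moreover have "P dvd (a - b)" using assms(3) by (simp add: cong_iff_dvd_diff)
  ultimately have "\<bar>P\<bar> \<le> \<bar>a - b\<bar>" using dvd_imp_le_int by blast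
  moreover have "\<bar>a - b\<bar> \<le> 2" using assms(1,2) by auto
  ultimately show False using P_gt_2 by simp
qed

lemma Legendre_euler: "[Legendre x P = x ^ ((p - 1) div 2)] (mod P)"
  using euler_criterion[OF prime gt_2] by simp

lemma Legendre_mult: "Legendre (x * y) P = Legendre x P * Legendre y P"
proof -
  have "[Legendre x P * Legendre y P = (x * y) ^ ((p - 1) div 2)] (mod P)"
    using cong_mult[OF Legendre_euler Legendre_euler] by (simp add: power_mult_distrib)
  then have "[Legendre (x * y) P = Legendre x P * Legendre y P] (mod P)"
    using Legendre_euler[of "x * y"] by (meson cong_sym cong_trans)
  moreover have "Legendre x P * Legendre y P \<in> {-1, 0, 1}"
    using Legendre_values[of x] Legendre_values[of y] by auto
  ultimately show ?thesis using cong_imp_eq_small Legendre_values by blast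
qed

lemma Legendre_cong: "[x = y] (mod P) \<Longrightarrow> Legendre x P = Legendre y P"
  using cong_pow[of x y P "(p - 1) div 2"] Legendre_euler[of x] Legendre_euler[of y]
    cong_imp_eq_small Legendre_values by (meson cong_sym cong_trans)

lemma Legendre_unit: "\<not> P dvd x \<Longrightarrow> Legendre x P = 1 \<or> Legendre x P = -1"
  by (auto simp: Legendre_def cong_0_iff)

lemma Legendre_square: "\<not> P dvd x \<Longrightarrow> Legendre (x\<^sup>2) P = 1"
proof -
  assume "\<not> P dvd x"
  then have "\<not> P dvd x\<^sup>2" by (rule not_dvd_power)
  moreover have "QuadRes P (x\<^sup>2)" unfolding QuadRes_def using cong_refl by blast
  ultimately show ?thesis by (simp add: Legendre_def cong_0_iff)
qed

lemma Legendre_eq_1_imp_square: "Legendre x P = 1 \<Longrightarrow> \<exists>y. [y\<^sup>2 = x] (mod P)"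
  by (auto simp: Legendre_def QuadRes_def split: if_splits)

lemma Legendre_cross_cong:
  assumes "\<not> P dvd b" "\<not> P dvd b'" "[a * b' = a' * b] (mod P)"
  shows "Legendre (a * b) P = Legendre (a' * b') P"
proof -
  have "[a * b * b'\<^sup>2 = a' * b' * b\<^sup>2] (mod P)"
    using cong_mult[OF assms(3) cong_refl[of "b * b'"]] by (simp add: power2_eq_square algebra_simps)
  then have "Legendre (a * b) P * Legendre (b'\<^sup>2) P = Legendre (a' * b') P * Legendre (b\<^sup>2) P"
    using Legendre_cong Legendre_mult by metis
  then show ?thesis using Legendre_square assms(1,2) by simp
qed

definition ppow :: "int \<Rightarrow> rat" where
  "ppow k = of_nat p powi k"

definition unit_part :: "rat \<Rightarrow> rat" where
  "unit_part q = q / ppow (val q)"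

lemma p_nonzero: "(of_nat p :: rat) \<noteq> 0"
  using gt_2 by simp

lemma ppow_nonzero: "ppow k \<noteq> 0"
  unfolding ppow_def using p_nonzero by (simp add: power_int_not_zero)

lemma ppow_add: "ppow (k + l) = ppow k * ppow l"
  unfolding ppow_def using p_nonzero by (simp add: power_int_add)

lemma ppow_1: "ppow 1 = of_nat p"
  unfolding ppow_def by simp

lemma ppow_2: "ppow 2 = (of_nat p)\<^sup>2"
  unfolding ppow_def by simp

lemma val_ppow: "val (ppow k) = k"
proof (cases "k \<ge> 0")
  case True
  then have "ppow k = of_nat p ^ nat k" unfolding ppow_def by (simp add: power_int_nonneg_exp)
  then show ?thesis using val_power[OF p_nonzero, of "nat k"] val_p True by simp
next
  case False
  then have "ppow k = inverse (of_nat p ^ nat (- k))" unfolding ppow_def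
    using power_int_minus[of "of_nat p :: rat" "- k"] power_int_nonneg_exp[of "- k" "of_nat p :: rat"] by simp
  then show ?thesis using val_power[OF p_nonzero, of "nat (- k)"] val_p False val_inverse p_nonzero by simp
qed

lemma val_ge_div_ppow: "val_ge (w / ppow k) j \<longleftrightarrow> val_ge w (j + k)"
  using val_divide[of w "ppow k"] ppow_nonzero[of k] val_ppow[of k] by (cases "w = 0") (auto simp: val_ge_def)

lemma val_ge_mult_ppow: "val_ge (w * ppow k) j \<longleftrightarrow> val_ge w (j - k)"
  using val_mult[of w "ppow k"] ppow_nonzero[of k] val_ppow[of k] by (cases "w = 0") (auto simp: val_ge_def)

lemma unit_part_nonzero: "q \<noteq> 0 \<Longrightarrow> unit_part q \<noteq> 0"
  unfolding unit_part_def using ppow_nonzero by simp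

lemma val_unit_part: "q \<noteq> 0 \<Longrightarrow> val (unit_part q) = 0"
  unfolding unit_part_def using ppow_nonzero val_divide val_ppow by simp

lemma val_ge_unit_part: "x \<noteq> 0 \<Longrightarrow> val_ge (unit_part x) 0"
  using val_unit_part by (simp add: val_ge_def)

lemma unit_part_decomp: "q = unit_part q * ppow (val q)"
  unfolding unit_part_def using ppow_nonzero by simp

lemma unit_part_val_0: "val q = 0 \<Longrightarrow> unit_part q = q"
  unfolding unit_part_def ppow_def by simp

lemma unit_part_mult: "x \<noteq> 0 \<Longrightarrow> y \<noteq> 0 \<Longrightarrow> unit_part (x * y) = unit_part x * unit_part y"
  unfolding unit_part_def using ppow_nonzero by (simp add: val_mult ppow_add)

lemma unit_part_inverse: "x \<noteq> 0 \<Longrightarrow> unit_part (inverse x) = inverse (unit_part x)"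
  unfolding unit_part_def ppow_def using val_inverse[of x] gt_2
  by (simp add: divide_inverse power_int_minus)

lemma unit_part_mult_ppow:
  assumes "w \<noteq> 0" "val w = 0"
  shows "w * ppow k \<noteq> 0" "val (w * ppow k) = k" "unit_part (w * ppow k) = w"
proof -
  show "w * ppow k \<noteq> 0" using assms ppow_nonzero by simp
  show v: "val (w * ppow k) = k" using val_mult[OF assms(1) ppow_nonzero] val_ppow assms by simp
  show "unit_part (w * ppow k) = w" unfolding unit_part_def v using ppow_nonzero by simp
qed

lemma unit_part_diff:
  assumes "x \<noteq> 0" "y \<noteq> 0" "val x = k" "val y = k"
  shows "unit_part x - unit_part y = (x - y) / ppow k"
  unfolding unit_part_def using assms by (simp add: diff_divide_distrib)

lemma quotient_of_val:
  assumes "quotient_of q = (n, e)" "q \<noteq> 0"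
  shows "val q = int (multiplicity P n) - int (multiplicity P e)" "\<not> (P dvd n \<and> P dvd e)"
proof -
  have "e > 0" "q = of_int n / of_int e" using quotient_of_denom_pos[OF assms(1)] quotient_of_div[OF assms(1)] .
  then show "val q = int (multiplicity P n) - int (multiplicity P e)"
    using val_of_int_div[of n e] assms(2) by fastforce
  show "\<not> (P dvd n \<and> P dvd e)"
    using quotient_of_coprime[OF assms(1)] not_unit_P coprime_common_divisor by blast
qed

lemma unit_quotient_of:
  assumes "q \<noteq> 0" "val q = 0" "quotient_of q = (n, e)"
  shows "\<not> P dvd n" "\<not> P dvd e"
proof -
  have "n \<noteq> 0" "e \<noteq> 0" using quotient_of_div[OF assms(3)] quotient_of_denom_pos[OF assms(3)] assms(1) by auto
  moreover have "multiplicity P n = multiplicity P e" using quotient_of_val[OF assms(3,1)] assms(2) by simp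
  ultimately show "\<not> P dvd n" "\<not> P dvd e"
    using quotient_of_val(2)[OF assms(3,1)] multiplicity_eq_0_iff by metis+
qed

lemma unit_as_fraction:
  assumes "q \<noteq> 0" "val q = 0"
  obtains a b where "q = of_int a / of_int b" "\<not> P dvd a" "\<not> P dvd b"
proof -
  obtain n e where q: "quotient_of q = (n, e)" by (cases "quotient_of q")
  show ?thesis using that[of n e] quotient_of_div[OF q] unit_quotient_of[OF assms q] by blast
qed

lemma integral_as_fraction:
  assumes "q \<noteq> 0" "val q \<ge> 0"
  obtains a b where "q = of_int a / of_int b" "\<not> P dvd b"
proof -
  obtain n e where q: "quotient_of q = (n, e)" by (cases "quotient_of q")
  have "n \<noteq> 0" "e > 0" using quotient_of_div[OF q] quotient_of_denom_pos[OF q] assms(1) by auto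
  then have "\<not> P dvd e"
    using quotient_of_val[OF q assms(1)] assms(2) multiplicity_eq_0_iff[of n] multiplicity_eq_0_iff[of e] by fastforce
  then show ?thesis using that quotient_of_div[OF q] by blast
qed

text \<open>For a unit q = n/e in lowest terms, the residue of q is n e^-1 mod p, whose Legendre symbol
  is that of n e.\<close>
definition residue_char :: "rat \<Rightarrow> int" where
  "residue_char q = Legendre (fst (quotient_of q) * snd (quotient_of q)) P"

lemma val_ge_fraction_diff_iff:
  assumes "\<not> P dvd b" "\<not> P dvd b'"
  shows "val_ge (of_int a / of_int b - of_int a' / of_int b') 1 \<longleftrightarrow> [a * b' = a' * b] (mod P)"
proof -
  have "b \<noteq> 0" "b' \<noteq> 0" using assms by auto
  then have "of_int a / of_int b - of_int a' / of_int b' = (of_int (a * b' - a' * b) :: rat) / of_int (b * b')"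
    by (simp add: field_simps)
  moreover have "val_ge ((of_int (a * b' - a' * b) :: rat) / of_int (b * b')) 1 \<longleftrightarrow> P dvd (a * b' - a' * b)"
    using val_ge_div_of_int[OF not_dvd_mult[OF assms]] val_ge_of_int_iff[of "a * b' - a' * b" 1] by simp
  ultimately show ?thesis by (simp add: cong_iff_dvd_diff)
qed

lemma residue_char_fraction:
  assumes "\<not> P dvd a" "\<not> P dvd b"
  shows "residue_char (of_int a / of_int b) = Legendre (a * b) P"
proof -
  obtain n e where q: "quotient_of (of_int a / of_int b) = (n, e)" by (cases "quotient_of (of_int a / of_int b :: rat)")
  have ab: "a \<noteq> 0" "b \<noteq> 0" using assms by auto
  then have "(of_int a / of_int b :: rat) \<noteq> 0" "val (of_int a / of_int b) = 0"
    using val_divide[of "of_int a" "of_int b"] val_of_int_eq_0 assms by auto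
  then have e: "\<not> P dvd e" using unit_quotient_of q by blast
  have "(of_int a / of_int b :: rat) = of_int n / of_int e" using quotient_of_div[OF q] .
  then have "a * e = n * b" using ab e frac_eq_eq[of "of_int b" "of_int e" "of_int a" "of_int n"]
    by (metis dvd_0_right of_int_eq_0_iff of_int_eq_iff of_int_mult)
  then have "Legendre (a * b) P = Legendre (n * e) P" using Legendre_cross_cong[OF assms(2) e] by simp
  then show ?thesis unfolding residue_char_def q by simp
qed

lemma residue_char_of_int: "\<not> P dvd c \<Longrightarrow> residue_char (of_int c) = Legendre c P"
  using residue_char_fraction[of c 1] P_gt_2 by simp

lemma residue_char_1 [simp]: "residue_char 1 = 1"
  using residue_char_of_int[of 1] Legendre_square[of 1] P_gt_2 by simp

lemma residue_char_cong:
  assumes "x \<noteq> 0" "val x = 0" "y \<noteq> 0" "val y = 0" "val_ge (x - y) 1"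
  shows "residue_char x = residue_char y"
proof -
  obtain a b where x: "x = of_int a / of_int b" "\<not> P dvd a" "\<not> P dvd b" using unit_as_fraction assms(1,2) .
  obtain a' b' where y: "y = of_int a' / of_int b'" "\<not> P dvd a'" "\<not> P dvd b'" using unit_as_fraction assms(3,4) .
  have "[a * b' = a' * b] (mod P)" using val_ge_fraction_diff_iff[of b b' a a'] x y assms(5) by simp
  then show ?thesis using residue_char_fraction Legendre_cross_cong x y by simp
qed

lemma residue_char_mult:
  assumes "x \<noteq> 0" "val x = 0" "y \<noteq> 0" "val y = 0"
  shows "residue_char (x * y) = residue_char x * residue_char y"
proof -
  obtain a b where x: "x = of_int a / of_int b" "\<not> P dvd a" "\<not> P dvd b" using unit_as_fraction assms(1,2) .
  obtain a' b' where y: "y = of_int a' / of_int b'" "\<not> P dvd a'" "\<not> P dvd b'" using unit_as_fraction assms(3,4) .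
  have e: "x * y = of_int (a * a') / of_int (b * b')" using x y by simp
  have "residue_char (of_int (a * a') / of_int (b * b')) = Legendre (a * a' * (b * b')) P"
    using residue_char_fraction not_dvd_mult x y by blast
  then have "residue_char (x * y) = Legendre (a * a' * (b * b')) P" unfolding e .
  also have "\<dots> = Legendre (a * b) P * Legendre (a' * b') P" by (simp add: Legendre_mult algebra_simps)
  finally show ?thesis using residue_char_fraction x y by simp
qed

lemma residue_char_pm: assumes "x \<noteq> 0" "val x = 0" shows "residue_char x = 1 \<or> residue_char x = -1"
proof -
  obtain a b where "x = of_int a / of_int b" "\<not> P dvd a" "\<not> P dvd b" using unit_as_fraction assms .
  then show ?thesis using residue_char_fraction Legendre_unit not_dvd_mult by simp
qed

lemma residue_char_square: assumes "x \<noteq> 0" "val x = 0" shows "residue_char (x * x) = 1"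
  using residue_char_mult[OF assms assms] residue_char_pm[OF assms] by auto

lemma residue_char_inverse:
  assumes "x \<noteq> 0" "val x = 0" shows "residue_char (inverse x) = residue_char x"
proof -
  have "val (inverse x) = 0" "inverse x \<noteq> 0" using val_inverse assms by auto
  then have "residue_char x * residue_char (inverse x) = 1"
    using residue_char_mult[of x "inverse x"] assms by simp
  then show ?thesis using residue_char_pm[OF assms] by auto
qed

lemma residue_char_unit_part_mult:
  "x \<noteq> 0 \<Longrightarrow> y \<noteq> 0 \<Longrightarrow>
     residue_char (unit_part (x * y)) = residue_char (unit_part x) * residue_char (unit_part y)"
  using unit_part_mult residue_char_mult unit_part_nonzero val_unit_part by simp

lemma residue_char_unit_part_square: "y \<noteq> 0 \<Longrightarrow> residue_char (unit_part (y * y)) = 1"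
  using unit_part_mult residue_char_square unit_part_nonzero val_unit_part by simp

lemma of_int_unit:
  assumes "\<not> P dvd w"
  shows "(of_int w :: rat) \<noteq> 0" "val (of_int w) = 0" "residue_char (of_int w) = Legendre w P"
  using assms val_of_int_eq_0 residue_char_of_int by auto

lemma residue_char_eq_1_imp_square:
  assumes "x \<noteq> 0" "val x = 0" "residue_char x = 1"
  obtains r where "\<not> P dvd r" "val_ge (x - of_int r ^ 2) 1"
proof -
  obtain a b where x: "x = of_int a / of_int b" "\<not> P dvd a" "\<not> P dvd b" using unit_as_fraction assms(1,2) .
  have "Legendre (a * b) P = 1" using residue_char_fraction x assms(3) by simp
  then obtain t where t: "[t\<^sup>2 = a * b] (mod P)" using Legendre_eq_1_imp_square by blast
  have "coprime b P" using x prime_P prime_imp_coprime coprime_commute by blast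
  then obtain bi where bi: "[b * bi = 1] (mod P)" using cong_solve_coprime_int by blast
  have "[(t * bi)\<^sup>2 * b = a * b * (b * bi) * bi] (mod P)"
    using cong_mult[OF t cong_refl[of "b * bi * bi"]] by (simp add: power2_eq_square algebra_simps)
  also have "[a * b * (b * bi) * bi = a * 1 * 1] (mod P)"
    using cong_mult[OF cong_mult[OF cong_refl bi] bi] by (simp add: algebra_simps)
  finally have c: "[(t * bi)\<^sup>2 * b = a] (mod P)" by simp
  have "\<not> P dvd t * bi"
  proof
    assume "P dvd t * bi"
    then have "P dvd (t * bi)\<^sup>2 * b" by (simp add: power2_eq_square)
    then show False using c x(2) cong_dvd_iff by blast
  qed
  moreover have "val_ge (of_int a / of_int b - of_int ((t * bi)\<^sup>2) / of_int 1) 1"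
    using val_ge_fraction_diff_iff[of b 1 a "(t * bi)\<^sup>2"] x c P_gt_2 by (simp add: cong_sym_eq)
  ultimately show ?thesis using that x by auto
qed

subsection \<open>Hensel lifting of square roots\<close>

lemma hensel_lift_square:
  assumes r: "\<not> P dvd r" and rc: "P dvd (r\<^sup>2 - c)" and n: "n \<ge> 1"
  shows "\<exists>z. P dvd (z - r) \<and> P ^ n dvd (z\<^sup>2 - c)"
  using n
proof (induction n rule: dec_induct)
  case base
  then show ?case using rc by (intro exI[of _ r]) simp
next
  case (step n)
  then obtain z where z: "P dvd (z - r)" "P ^ n dvd (z\<^sup>2 - c)" by blast
  obtain t where t: "z\<^sup>2 - c = P ^ n * t" using z(2) by (auto elim: dvdE)
  have "\<not> P dvd z" using z(1) r dvd_diff[of P z "z - r"] by auto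
  then have "coprime (2 * z) P" using not_dvd_mult[OF not_dvd_2] prime_P prime_imp_coprime coprime_commute by blast
  then obtain w where w: "[2 * z * w = 1] (mod P)" using cong_solve_coprime_int by blast
  text \<open>Newton step: z' = z - (z^2 - c) / (2 z), with 1/(2z) replaced by its inverse w mod p.\<close>
  define z' where "z' = z - t * w * P ^ n"
  have "P ^ (2 * n) = P ^ n * P ^ n" by (simp add: mult_2 power_add)
  then have "z'\<^sup>2 - c = P ^ n * (t * (1 - 2 * z * w)) + (t * w)\<^sup>2 * P ^ (2 * n)"
    unfolding z'_def using t by (simp add: power2_eq_square algebra_simps)
  moreover have "P dvd 1 - 2 * z * w" using w by (metis cong_iff_dvd_diff cong_sym_eq)
  then have "P ^ Suc n dvd P ^ n * (t * (1 - 2 * z * w))" by (simp add: mult_dvd_mono)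
  moreover have "P ^ Suc n dvd (t * w)\<^sup>2 * P ^ (2 * n)"
    using step(1) le_imp_power_dvd[of "Suc n" "2 * n" P] by simp
  ultimately have "P ^ Suc n dvd z'\<^sup>2 - c" by simp
  moreover have "P dvd z' - r"
  proof -
    have "P dvd t * w * P ^ n" using step(1) by (simp add: dvd_power)
    then have "P dvd (z - r) - t * w * P ^ n" using z(1) by (rule dvd_diff[rotated])
    then show ?thesis unfolding z'_def by (simp add: algebra_simps)
  qed
  ultimately show ?case by blast
qed

lemma integral_approx_by_int:
  assumes "q \<noteq> 0" "val q \<ge> 0"
  obtains c :: int where "val_ge (q - of_int c) (int n)"
proof -
  obtain a b where q: "q = of_int a / of_int b" "\<not> P dvd b" using integral_as_fraction assms .
  have "coprime b P" using q prime_P prime_imp_coprime coprime_commute by blast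
  then have "coprime b (P ^ n)" by simp
  then obtain bi where bi: "[b * bi = 1] (mod P ^ n)" using cong_solve_coprime_int by blast
  have "b \<noteq> 0" using q by auto
  then have e: "q - of_int (a * bi) = of_int (a * (1 - b * bi)) / of_int b" using q by (simp add: field_simps)
  have "P ^ n dvd 1 - b * bi" using bi by (metis cong_iff_dvd_diff cong_sym_eq)
  then have "P ^ n dvd a * (1 - b * bi)" by simp
  then have "val_ge (of_int (a * (1 - b * bi)) / of_int b) (int n)"
    using val_ge_of_int_iff val_ge_div_of_int[OF q(2)] by blast
  then show ?thesis using that unfolding e[symmetric] by blast
qed

lemma unit_sqrt_approx:
  assumes "q \<noteq> 0" "val q = 0" "\<not> P dvd r" "val_ge (q - of_int r ^ 2) 1"
  shows "\<exists>z. P dvd (z - r) \<and> val_ge (q - of_int z ^ 2) (int n)"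
proof -
  define n' where "n' = max n 1"
  obtain c where c: "val_ge (q - of_int c) (int n')" using integral_approx_by_int[of q n'] assms(1,2) by auto
  then have "val_ge (q - of_int c) 1" using val_ge_mono[of _ "int n'" 1] unfolding n'_def by force
  then have "val_ge (of_int (c - r\<^sup>2)) (int 1)" using val_ge_diff[OF assms(4)] by fastforce
  then have "P dvd (r\<^sup>2 - c)" using val_ge_of_int_iff by (metis dvd_minus_iff minus_diff_eq power_one_right)
  then have "\<exists>z. P dvd (z - r) \<and> P ^ n' dvd (z\<^sup>2 - c)"
    using hensel_lift_square[OF assms(3)] unfolding n'_def by simp
  then obtain z where z: "P dvd (z - r)" "P ^ n' dvd (z\<^sup>2 - c)" by blast
  have "val_ge ((q - of_int c) - of_int (z\<^sup>2 - c)) (int n')" using z(2) val_ge_of_int_iff val_ge_diff c by blast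
  then have "val_ge (q - of_int z ^ 2) (int n)" using val_ge_mono unfolding n'_def by fastforce
  then show ?thesis using z(1) by blast
qed

lemma close_imp_same_residue:
  assumes "y \<noteq> 0" "val_ge (x - y) (val y + 1)"
  shows "x \<noteq> 0" "val x = val y" "residue_char (unit_part x) = residue_char (unit_part y)"
proof -
  show x: "x \<noteq> 0" "val x = val y" using val_add_eq[OF assms] by auto
  have "val_ge ((x - y) / ppow (val y)) 1" using val_ge_div_ppow assms(2) by (simp add: add.commute)
  then have "val_ge (unit_part x - unit_part y) 1" using unit_part_diff[OF x(1) assms(1) x(2)] by simp
  then show "residue_char (unit_part x) = residue_char (unit_part y)"
    using residue_char_cong unit_part_nonzero val_unit_part x assms(1) by blast
qed

subsection \<open>Square classes of p-adic units\<close>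

text \<open>Since p is odd, the class of a unit X in Q_p^x/(Q_p^x)^2 is determined by the parity e of its
  valuation and the quadratic character c of the residue of its unit part; square_class X e c says
  that X has these invariants.\<close>
definition square_class :: "(nat \<Rightarrow> rat) \<Rightarrow> bool \<Rightarrow> int \<Rightarrow> bool" where
  "square_class X e c \<longleftrightarrow>
     (\<forall>\<^sub>F n in sequentially. X n \<noteq> 0 \<and> (even (val (X n)) \<longleftrightarrow> e) \<and> residue_char (unit_part (X n)) = c)"

lemma square_class_exists:
  assumes "is_cauchy X" "\<not> is_null X"
  obtains e c where "square_class X e c"
proof -
  obtain k where "\<forall>\<^sub>F n in sequentially. X n \<noteq> 0 \<and> val (X n) = k"
    using unit_val_eventually_const[OF assms] .
  then obtain N where kN: "\<forall>n\<ge>N. X n \<noteq> 0 \<and> val (X n) = k" unfolding eventually_sequentially by blast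
  obtain M where M: "\<forall>m\<ge>M. \<forall>n\<ge>M. val_ge (X m - X n) (k + 1)" using assms(1) unfolding is_cauchy_def by blast
  define n0 where "n0 = max N M"
  have "X n \<noteq> 0 \<and> (even (val (X n)) \<longleftrightarrow> even k) \<and> residue_char (unit_part (X n)) = residue_char (unit_part (X n0))"
    if "n \<ge> n0" for n
  proof -
    have "val_ge (X n - X n0) (val (X n0) + 1)" using M kN that unfolding n0_def by simp
    then show ?thesis using close_imp_same_residue[of "X n0" "X n"] kN that unfolding n0_def by simp
  qed
  then have "square_class X (even k) (residue_char (unit_part (X n0)))"
    unfolding square_class_def eventually_sequentially by blast
  then show ?thesis by (rule that)
qed

lemma square_class_unique:
  assumes "square_class X e c" "square_class X e' c'" shows "e = e' \<and> c = c'"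
proof -
  obtain n where "X n \<noteq> 0 \<and> (even (val (X n)) \<longleftrightarrow> e) \<and> residue_char (unit_part (X n)) = c"
    "X n \<noteq> 0 \<and> (even (val (X n)) \<longleftrightarrow> e') \<and> residue_char (unit_part (X n)) = c'"
    using eventually_happens'[OF sequentially_bot eventually_conj[OF assms[unfolded square_class_def]]] by blast
  then show ?thesis by blast
qed

lemma square_class_pm:
  assumes "square_class X e c" shows "c = 1 \<or> c = -1"
proof -
  obtain n where "X n \<noteq> 0" "residue_char (unit_part (X n)) = c"
    using eventually_happens'[OF sequentially_bot assms[unfolded square_class_def]] by blast
  then show ?thesis using residue_char_pm[of "unit_part (X n)"] unit_part_nonzero val_unit_part by auto
qed

lemma square_class_mult:
  assumes "square_class X e c" "square_class Y e' c'"
  shows "square_class (\<lambda>n. X n * Y n) (e = e') (c * c')"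
  using assms unfolding square_class_def by eventually_elim (auto simp: val_mult residue_char_unit_part_mult)

lemma square_class_inverse:
  assumes "square_class X e c" shows "square_class (\<lambda>n. inverse (X n)) e c"
  using assms unfolding square_class_def by eventually_elim (auto simp: val_inverse unit_part_inverse residue_char_inverse unit_part_nonzero val_unit_part)

lemma square_class_null_diff:
  assumes "square_class S e c" "is_cauchy X" "\<not> is_null X" "is_null (\<lambda>n. X n - S n)"
  shows "square_class X e c"
proof -
  obtain k where "\<forall>\<^sub>F n in sequentially. X n \<noteq> 0 \<and> val (X n) = k"
    using unit_val_eventually_const[OF assms(2,3)] .
  moreover have "\<forall>\<^sub>F n in sequentially. val_ge (S n - X n) (k + 1)"
    using null_uminus[OF assms(4)] unfolding is_null_def by simp
  ultimately show ?thesis using assms(1) unfolding square_class_def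
  proof eventually_elim
    case (elim n)
    then show ?case using close_imp_same_residue[of "X n" "S n"] by simp
  qed
qed

lemma square_class_const: "c \<noteq> 0 \<Longrightarrow> square_class (Qp_const c) (even (val c)) (residue_char (unit_part c))"
  unfolding square_class_def Qp_const_def by auto

lemma Qp_const_unit: "c \<noteq> 0 \<Longrightarrow> Qp_const c \<in> Qp_units p"
  unfolding Qp_units_iff Qp_const_def is_null_def using cauchy_const[of c]
  by (auto simp: val_ge_def intro!: exI[of _ "val c + 1"])

lemma sq_equiv_square_class:
  assumes "sq_equiv p X Y" "square_class Y e c"
  shows "square_class X e c"
proof -
  obtain Z where Z: "Z \<in> Qp_units p" "Qp_eq p X (\<lambda>n. Y n * (Z n)\<^sup>2)" and X: "X \<in> Qp_units p"
    using assms(1) unfolding sq_equiv_def by blast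
  obtain e' c' where ec: "square_class Z e' c'" using square_class_exists Z(1) Qp_units_iff by blast
  have "square_class (\<lambda>n. (Y n * Z n) * Z n) ((e = e') = e') (c * c' * c')"
    using square_class_mult[OF square_class_mult[OF assms(2) ec] ec] .
  moreover have "c * c' * c' = c" using square_class_pm[OF ec] by auto
  moreover have "((e = e') = e') = e" by auto
  moreover have "(\<lambda>n. (Y n * Z n) * Z n) = (\<lambda>n. Y n * (Z n)\<^sup>2)" by (simp add: power2_eq_square algebra_simps)
  ultimately have "square_class (\<lambda>n. Y n * (Z n)\<^sup>2) e c" by (simp only:)
  moreover have "is_null (\<lambda>n. X n - Y n * (Z n)\<^sup>2)" using Z(2) Qp_eq_iff by simp
  ultimately show ?thesis using square_class_null_diff X Qp_units_iff by simp
qed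


lemma val_ge_of_int_diff_of_squares:
  assumes "P dvd z - r" "P dvd z' - r" "\<not> P dvd r" "val_ge (of_int (z\<^sup>2 - z'\<^sup>2)) L"
  shows "val_ge (of_int (z - z')) L"
proof -
  have "P dvd (z + z') - 2 * r"
    using dvd_add[OF assms(1,2)] by (simp add: algebra_simps)
  moreover have "\<not> P dvd 2 * r" using not_dvd_mult[OF not_dvd_2 assms(3)] .
  ultimately have nd: "\<not> P dvd z + z'"
    using dvd_diff[of P "z + z'" "z + z' - 2 * r"] by auto
  then have "(of_int (z + z') :: rat) \<noteq> 0" by (metis dvd_0_right of_int_eq_0_iff)
  moreover have "(of_int (z\<^sup>2 - z'\<^sup>2) :: rat) = of_int (z - z') * of_int (z + z')"
    by (simp add: power2_eq_square algebra_simps)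
  ultimately have "(of_int (z\<^sup>2 - z'\<^sup>2) :: rat) / of_int (z + z') = of_int (z - z')" by simp
  then show ?thesis using val_ge_div_of_int[OF nd, of "of_int (z\<^sup>2 - z'\<^sup>2)" L] assms(4) by simp
qed

lemma cauchy_unit_part:
  assumes "is_cauchy X" "\<not> is_null X" shows "is_cauchy (\<lambda>n. unit_part (X n))"
  unfolding is_cauchy_def
proof
  fix K
  obtain k N where kN: "\<forall>n\<ge>N. X n \<noteq> 0 \<and> val (X n) = k"
    using unit_val_eventually_const[OF assms] unfolding eventually_sequentially by metis
  obtain M where M: "\<forall>m\<ge>M. \<forall>n\<ge>M. val_ge (X m - X n) (K + k)" using assms(1) unfolding is_cauchy_def by blast
  have "val_ge (unit_part (X m) - unit_part (X n)) K" if "m \<ge> max N M" "n \<ge> max N M" for m n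
    using unit_part_diff[of "X m" "X n" k] val_ge_div_ppow kN M that by simp
  then show "\<exists>N. \<forall>m\<ge>N. \<forall>n\<ge>N. val_ge (unit_part (X m) - unit_part (X n)) K" by blast
qed

text \<open>Square roots z n of U n lifted from one residue r are coherent: for two of them the factor
  z m + z n of z m^2 - z n^2 is a unit, so z is Cauchy as soon as z^2 is.\<close>
lemma cauchy_coherent_roots:
  assumes U: "is_cauchy U" and r: "\<not> P dvd r"
    and z: "\<And>n. n \<ge> n0 \<Longrightarrow> P dvd z n - r \<and> val_ge (U n - (of_int (z n))\<^sup>2) (int n)"
  shows "is_cauchy (\<lambda>n. of_int (z n))"
  unfolding is_cauchy_def
proof
  fix K
  obtain M where M: "\<forall>m\<ge>M. \<forall>n\<ge>M. val_ge (U m - U n) K" using U unfolding is_cauchy_def by blast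
  have "val_ge (of_int (z m) - of_int (z n)) K" if mn: "m \<ge> max (max n0 M) (nat K)" "n \<ge> max (max n0 M) (nat K)" for m n
  proof -
    have m: "m \<ge> n0" "K \<le> int m" and n: "n \<ge> n0" "K \<le> int n" using mn by auto
    have "val_ge (U m - (of_int (z m))\<^sup>2) K" "val_ge (U n - (of_int (z n))\<^sup>2) K"
      using z m n val_ge_mono by blast+
    moreover have "val_ge (U m - U n) K" using M mn by simp
    ultimately have "val_ge ((U m - U n) - (U m - (of_int (z m))\<^sup>2) + (U n - (of_int (z n))\<^sup>2)) K"
      using val_ge_add val_ge_diff by blast
    then have "val_ge (of_int ((z m)\<^sup>2 - (z n)\<^sup>2)) K" by simp
    then have "val_ge (of_int (z m - z n)) K"
      using val_ge_of_int_diff_of_squares[OF conjunct1[OF z[OF m(1)]] conjunct1[OF z[OF n(1)]] r] by blast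
    then show ?thesis by simp
  qed
  then show "\<exists>N. \<forall>m\<ge>N. \<forall>n\<ge>N. val_ge (of_int (z m) - of_int (z n)) K" by blast
qed

lemma unit_seq_sqrt:
  assumes U: "is_cauchy U"
    and ev: "\<forall>\<^sub>F n in sequentially. U n \<noteq> 0 \<and> val (U n) = 0 \<and> residue_char (U n) = 1"
  obtains z where "is_cauchy (\<lambda>n. of_int (z n))" "\<forall>\<^sub>F n in sequentially. \<not> P dvd z n"
    "is_null (\<lambda>n. U n - (of_int (z n))\<^sup>2)"
proof -
  obtain N where N: "\<forall>n\<ge>N. U n \<noteq> 0 \<and> val (U n) = 0 \<and> residue_char (U n) = 1"
    using ev unfolding eventually_sequentially by blast
  obtain M where M: "\<forall>m\<ge>M. \<forall>n\<ge>M. val_ge (U m - U n) 1" using U unfolding is_cauchy_def by blast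
  define n0 where "n0 = max N M"
  obtain r where r: "\<not> P dvd r" "val_ge (U n0 - of_int r ^ 2) 1"
    using residue_char_eq_1_imp_square[of "U n0"] N unfolding n0_def by auto
  have "\<exists>z. P dvd (z - r) \<and> val_ge (U n - of_int z ^ 2) (int n)" if "n \<ge> n0" for n
  proof -
    have "val_ge (U n - U n0) 1" using M that unfolding n0_def by simp
    then have "val_ge ((U n - U n0) + (U n0 - of_int r ^ 2)) 1" using val_ge_add r(2) by blast
    then show ?thesis using unit_sqrt_approx r(1) N that unfolding n0_def by simp
  qed
  then obtain z where z: "\<And>n. n \<ge> n0 \<Longrightarrow> P dvd z n - r \<and> val_ge (U n - (of_int (z n))\<^sup>2) (int n)"
    by metis
  have "\<forall>\<^sub>F n in sequentially. \<not> P dvd z n"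
    using z r(1) dvd_diff[of P "z n" "z n - r" for n] unfolding eventually_sequentially by auto
  moreover have "is_null (\<lambda>n. U n - (of_int (z n))\<^sup>2)"
    unfolding is_null_def eventually_sequentially
    using z val_ge_mono by (metis max.boundedE nat_le_iff max.cobounded1 max.cobounded2)
  ultimately show ?thesis using that cauchy_coherent_roots[OF U r(1) z] by blast
qed

lemma trivial_square_class_imp_square:
  assumes Q: "is_cauchy Q" "\<not> is_null Q" and cls: "square_class Q True 1"
  obtains Z where "is_cauchy Z" "\<not> is_null Z" "is_null (\<lambda>n. Q n - (Z n)\<^sup>2)"
proof -
  obtain k where k: "\<forall>\<^sub>F n in sequentially. Q n \<noteq> 0 \<and> val (Q n) = k"
    using unit_val_eventually_const[OF Q] .
  have "\<forall>\<^sub>F n in sequentially. even k" using k cls unfolding square_class_def by eventually_elim auto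
  then obtain j where j: "k = j + j" using eventually_happens'[OF sequentially_bot] by (metis evenE mult_2)
  obtain z where z: "is_cauchy (\<lambda>n. of_int (z n))" "\<forall>\<^sub>F n in sequentially. \<not> P dvd z n"
    and null: "is_null (\<lambda>n. unit_part (Q n) - (of_int (z n))\<^sup>2)"
  proof (rule unit_seq_sqrt[OF cauchy_unit_part[OF Q]])
    show "\<forall>\<^sub>F n in sequentially. unit_part (Q n) \<noteq> 0 \<and> val (unit_part (Q n)) = 0 \<and> residue_char (unit_part (Q n)) = 1"
      using cls unfolding square_class_def by eventually_elim (simp add: unit_part_nonzero val_unit_part)
  qed
  define Z where "Z n = of_int (z n) * ppow j" for n
  have "is_cauchy Z" unfolding Z_def using cauchy_mult[OF z(1) cauchy_const] .
  moreover have "\<forall>\<^sub>F n in sequentially. Z n \<noteq> 0 \<and> val (Z n) = j"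
    using z(2)
  proof eventually_elim
    case (elim n)
    then show ?case using unit_part_mult_ppow[OF of_int_unit(1,2)[OF elim]] unfolding Z_def by simp
  qed
  then have "\<not> is_null Z" by (rule not_null_eventually_val)
  moreover have "\<forall>\<^sub>F n in sequentially. (unit_part (Q n) - (of_int (z n))\<^sup>2) * ppow k = Q n - (Z n)\<^sup>2"
    using k
  proof eventually_elim
    case (elim n)
    then have "Q n = unit_part (Q n) * ppow k" using unit_part_decomp[of "Q n"] by simp
    then show ?case unfolding Z_def j ppow_add by (simp add: power2_eq_square algebra_simps)
  qed
  then have "is_null (\<lambda>n. Q n - (Z n)\<^sup>2)"
    by (rule null_eventually_cong[OF null_mult_bounded[OF null bounded_const[of "ppow k"]]])
  ultimately show ?thesis using that by blast
qed

lemma same_square_class_imp_sq_equiv: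
  assumes X: "X \<in> Qp_units p" and Y: "Y \<in> Qp_units p"
    and cX: "square_class X e c" and cY: "square_class Y e c"
  shows "sq_equiv p X Y"
proof -
  define Q where "Q n = X n * inverse (Y n)" for n
  have Y': "is_cauchy Y" "\<not> is_null Y" and X': "is_cauchy X" "\<not> is_null X" using X Y Qp_units_iff by auto
  have QY: "\<forall>\<^sub>F n in sequentially. Q n * Y n = X n"
    using cY unfolding square_class_def Q_def by eventually_elim simp
  have "is_cauchy Q" unfolding Q_def using cauchy_mult[OF X'(1) cauchy_inverse[OF Y']] .
  moreover have "\<not> is_null Q"
  proof
    assume "is_null Q"
    then have "is_null (\<lambda>n. Q n * Y n)" using null_mult_bounded cauchy_bounded[OF Y'(1)] by blast
    then show False using null_eventually_cong[OF _ QY] X'(2) by blast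
  qed
  moreover have "square_class Q True 1"
  proof -
    have "square_class Q (e = e) (c * c)"
      unfolding Q_def using square_class_mult[OF cX square_class_inverse[OF cY]] .
    moreover have "c * c = 1" using square_class_pm[OF cX] by auto
    ultimately show ?thesis by simp
  qed
  ultimately obtain Z where Z: "is_cauchy Z" "\<not> is_null Z" "is_null (\<lambda>n. Q n - (Z n)\<^sup>2)"
    using trivial_square_class_imp_square by blast
  have "is_null (\<lambda>n. (Q n - (Z n)\<^sup>2) * Y n)"
    using null_mult_bounded[OF Z(3) cauchy_bounded[OF Y'(1)]] .
  moreover have "\<forall>\<^sub>F n in sequentially. (Q n - (Z n)\<^sup>2) * Y n = X n - Y n * (Z n)\<^sup>2"
    using QY by eventually_elim (simp add: algebra_simps)
  ultimately have "is_null (\<lambda>n. X n - Y n * (Z n)\<^sup>2)" by (rule null_eventually_cong)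
  moreover have "Z \<in> Qp_units p" using Z Qp_units_iff by simp
  ultimately show ?thesis using X Y unfolding sq_equiv_def Qp_eq_iff by blast
qed

lemma square_class_1: "square_class (Qp_const 1) True 1"
  using square_class_const[of 1] unit_part_val_0[of 1] by simp

lemma square_class_1_iff: "square_class (Qp_const 1) e c \<longleftrightarrow> e \<and> c = 1"
  using square_class_unique[OF square_class_1, of e c] square_class_1 by auto

lemma square_class_of_int: "\<not> P dvd w \<Longrightarrow> square_class (Qp_const (of_int w)) True (Legendre w P)"
  using square_class_const[of "of_int w"] of_int_unit[of w] unit_part_val_0[of "of_int w"] by simp

lemma unit_square_class:
  assumes "z \<in> Qp_units p" obtains e c where "square_class z e c"
  using square_class_exists assms Qp_units_iff by blast

lemma sq_equiv_iff_square_class: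
  assumes z: "z \<in> Qp_units p" and w: "w \<in> Qp_units p" and cz: "square_class z e c"
  shows "sq_equiv p z w \<longleftrightarrow> square_class w e c"
proof
  assume zw: "sq_equiv p z w"
  obtain e' c' where cw: "square_class w e' c'" using unit_square_class[OF w] .
  then show "square_class w e c"
    using square_class_unique[OF cz sq_equiv_square_class[OF zw cw]] by simp
qed (use same_square_class_imp_sq_equiv[OF z w cz] in blast)

lemma padic_abs_eq_1_iff: "padic_abs p q = 1 \<longleftrightarrow> q \<noteq> 0 \<and> val q = 0"
  using gt_2 by (auto simp: padic_abs_def powr_eq_one_iff)

lemma Zp_unit_square_class:
  assumes "X \<in> Zp_units p"
  shows "X \<in> Qp_units p" "\<exists>c. square_class X True c"
proof -
  have ev: "\<forall>\<^sub>F n in sequentially. X n \<noteq> 0 \<and> val (X n) = 0" and cX: "is_cauchy X"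
    using assms unfolding Zp_units_def eventually_sequentially padic_abs_eq_1_iff padic_cauchy_iff by auto
  then show X: "X \<in> Qp_units p" using not_null_eventually_val Qp_units_iff by blast
  obtain e c where cls: "square_class X e c" using unit_square_class[OF X] .
  have "\<forall>\<^sub>F n in sequentially. e" using ev cls unfolding square_class_def by eventually_elim auto
  then show "\<exists>c. square_class X True c" using cls eventually_happens'[OF sequentially_bot] by force
qed

lemma Qp_const_Zp_unit: "\<not> P dvd w \<Longrightarrow> Qp_const (of_int w) \<in> Zp_units p"
  using of_int_unit[of w] cauchy_const padic_cauchy_iff
  unfolding Zp_units_def Qp_const_def padic_abs_eq_1_iff by auto

end

text \<open>The data at a prime p dividing the squarefree twist d = p d0 of E : y^2 = x^3 + A x^2 + B x,
  p not dividing 2 disc(E).\<close>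
locale twist_at_p = odd_prime +
  fixes A B d0 :: int
  assumes B_unit: "\<not> int p dvd B" and D_unit: "\<not> int p dvd (A^2 - 4 * B)" and d0_unit: "\<not> int p dvd d0"
begin

definition a :: rat where "a = of_int (int p * d0 * A)"
definition b :: rat where "b = of_int ((int p * d0)^2 * B)"
definition isog_cubic :: "rat \<Rightarrow> rat" where
  "isog_cubic x = x ^ 3 + (- 2 * a) * x\<^sup>2 + (a\<^sup>2 - 4 * b) * x"
abbreviation D :: int where "D \<equiv> A^2 - 4 * B"

lemma a_eq: "a = of_int (d0 * A) * ppow 1" unfolding a_def ppow_1 by simp
lemma b_eq: "b = of_int (d0^2 * B) * ppow 2" unfolding b_def ppow_2 by (simp add: power_mult_distrib)
lemma isog_disc_eq: "a\<^sup>2 - 4 * b = of_int (d0^2 * D) * ppow 2"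
  unfolding a_def b_def ppow_2 by (simp add: power_mult_distrib algebra_simps)

lemma Legendre_d0_sq_D: "Legendre (d0^2 * D) P = Legendre D P"
  using Legendre_mult Legendre_square[OF d0_unit] by simp

lemma isog_disc_unit: "a\<^sup>2 - 4 * b \<noteq> 0" "val (a\<^sup>2 - 4 * b) = 2" "residue_char (unit_part (a\<^sup>2 - 4 * b)) = Legendre D P"
proof -
  have w: "\<not> P dvd d0^2 * D" using not_dvd_mult not_dvd_power d0_unit D_unit by blast
  note iu = of_int_unit[OF w]
  show "a\<^sup>2 - 4 * b \<noteq> 0" "val (a\<^sup>2 - 4 * b) = 2" using unit_part_mult_ppow[OF iu(1,2)] isog_disc_eq by auto
  show "residue_char (unit_part (a\<^sup>2 - 4 * b)) = Legendre D P" using unit_part_mult_ppow[OF iu(1,2)] isog_disc_eq iu(3) Legendre_d0_sq_D by simp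
qed

lemma val_ge_a: "val_ge a 1"
proof -
  have "val_ge (of_int (d0*A)) 0" by (rule val_ge_of_int)
  then have "val_ge (of_int (d0*A) * ppow 1) 1" using val_ge_mult_ppow[of "of_int (d0*A)" 1 1] by simp
  then show ?thesis using a_eq by simp
qed

lemma val_ge_4b: "val_ge (4 * b) 2"
proof -
  have e: "4 * b = of_int (4 * d0^2 * B) * ppow 2" using b_eq by simp
  have "val_ge (of_int (4 * d0^2 * B)) 0" by (rule val_ge_of_int)
  then have "val_ge (of_int (4 * d0^2 * B) * ppow 2) 2" using val_ge_mult_ppow[of "of_int (4 * d0^2 * B)" 2 2] by simp
  then show ?thesis unfolding e .
qed

lemma isog_cubic_eq_shifted: "isog_cubic x = x * ((x - a)\<^sup>2 - 4 * b)"
  unfolding isog_cubic_def power2_eq_square power3_eq_cube by (simp add: algebra_simps)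

lemma isog_cubic_eq_disc: "isog_cubic x = x * ((a\<^sup>2 - 4 * b) + x * (x - 2 * a))"
  unfolding isog_cubic_def power2_eq_square power3_eq_cube by (simp add: algebra_simps)

subsection \<open>Points of E'^d over Q_p, by the valuation of x\<close>

lemma approx_square_trivial_class:
  assumes "f \<noteq> 0" "val_ge (y\<^sup>2 - f) K" "K \<ge> val f + 1"
  shows "even (val f) \<and> residue_char (unit_part f) = 1"
proof -
  have "val_ge (y\<^sup>2 - f) (val f + 1)" using val_ge_mono[OF assms(2,3)] .
  note c = close_imp_same_residue[OF assms(1) this]
  then have y: "y \<noteq> 0" by simp
  have "val (y\<^sup>2) = 2 * val y" using val_power[OF y, of 2] by simp
  moreover have "residue_char (unit_part (y\<^sup>2)) = 1"
    using residue_char_unit_part_square[OF y] by (simp add: power2_eq_square)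
  ultimately show ?thesis using c(2,3) by presburger
qed

lemma val_ge_2a: "val_ge (2 * a) 1"
  using val_ge_add[OF val_ge_a val_ge_a] by (simp only: mult_2)

text \<open>If v(x) \<le> 0 then x^2 - 2a x + a^2 - 4b is x^2 up to higher order terms, so x^3 must be a square.\<close>
lemma point_val_le_0:
  assumes x0: "x \<noteq> 0" and vx: "val x \<le> 0" and y: "val_ge (y\<^sup>2 - isog_cubic x) K"
    and K: "K \<ge> 3 * \<bar>val x\<bar> + 4"
  shows "even (val x) \<and> residue_char (unit_part x) = 1"
proof -
  have "val_ge ((x - a) - x) (val x + 1)" using val_ge_mono[OF val_ge_a] vx by simp
  note c1 = close_imp_same_residue[OF x0 this]
  define s where "s = (x - a) * (x - a)"
  have s: "s \<noteq> 0" "val s = 2 * val x" "residue_char (unit_part s) = 1"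
    using c1 val_mult[OF c1(1) c1(1)] residue_char_unit_part_square[OF c1(1)] unfolding s_def by simp_all
  have "val_ge ((s - 4 * b) - s) (val s + 1)" using val_ge_mono[OF val_ge_4b] s(2) vx by simp
  note c2 = close_imp_same_residue[OF s(1) this]
  have f: "isog_cubic x = x * (s - 4 * b)" using isog_cubic_eq_shifted unfolding s_def by (simp add: power2_eq_square)
  have "isog_cubic x \<noteq> 0" "val (isog_cubic x) = 3 * val x"
    "residue_char (unit_part (isog_cubic x)) = residue_char (unit_part x)"
    unfolding f using x0 c2 s val_mult[OF x0 c2(1)] residue_char_unit_part_mult[OF x0 c2(1)] by simp_all
  moreover have "K \<ge> val (isog_cubic x) + 1" using calculation(2) K vx by simp
  ultimately have "even (val (isog_cubic x)) \<and> residue_char (unit_part (isog_cubic x)) = 1"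
    using approx_square_trivial_class[OF _ y] by blast
  then show ?thesis using \<open>val (isog_cubic x) = 3 * val x\<close>
    \<open>residue_char (unit_part (isog_cubic x)) = residue_char (unit_part x)\<close> by simp
qed

text \<open>If v(x) \<ge> 2 then x^2 - 2a x + a^2 - 4b is a^2 - 4b up to higher order terms, of class (D/p).\<close>
lemma point_val_ge_2:
  assumes x0: "x \<noteq> 0" and vx: "val x \<ge> 2" and y: "val_ge (y\<^sup>2 - isog_cubic x) K"
    and K: "K \<ge> val x + 3"
  shows "even (val x) \<and> residue_char (unit_part x) = Legendre D P"
proof -
  define g where "g = (a\<^sup>2 - 4 * b) + x * (x - 2 * a)"
  have "val_ge x 2" using vx x0 by (simp add: val_ge_def)
  moreover have "val_ge (x - 2 * a) 1" using val_ge_diff[OF val_ge_mono[OF \<open>val_ge x 2\<close>] val_ge_2a] by simp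
  ultimately have "val_ge (x * (x - 2 * a)) (2 + 1)" by (rule val_ge_mult)
  then have "val_ge (g - (a\<^sup>2 - 4 * b)) (val (a\<^sup>2 - 4 * b) + 1)" unfolding g_def using isog_disc_unit by simp
  then have g: "g \<noteq> 0" "val g = 2" "residue_char (unit_part g) = Legendre D P"
    using close_imp_same_residue[OF isog_disc_unit(1), of g] isog_disc_unit by simp_all
  have f: "isog_cubic x = x * g" using isog_cubic_eq_disc unfolding g_def .
  have "isog_cubic x \<noteq> 0" "val (isog_cubic x) = val x + 2"
    "residue_char (unit_part (isog_cubic x)) = residue_char (unit_part x) * Legendre D P"
    unfolding f using x0 g val_mult[OF x0 g(1)] residue_char_unit_part_mult[OF x0 g(1)] by simp_all
  moreover have "K \<ge> val (isog_cubic x) + 1" using calculation(2) K by simp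
  ultimately have "even (val (isog_cubic x)) \<and> residue_char (unit_part (isog_cubic x)) = 1"
    using approx_square_trivial_class[OF _ y] by blast
  then have "even (val x) \<and> residue_char (unit_part x) * Legendre D P = 1"
    using \<open>val (isog_cubic x) = val x + 2\<close>
      \<open>residue_char (unit_part (isog_cubic x)) = residue_char (unit_part x) * Legendre D P\<close> by simp
  then show ?thesis using Legendre_unit[OF D_unit] by auto
qed

lemma point_val_ne_1:
  assumes "x \<noteq> 0" "val x \<noteq> 1" "val_ge (y\<^sup>2 - isog_cubic x) K" "K \<ge> 3 * \<bar>val x\<bar> + 4"
  shows "even (val x) \<and> (residue_char (unit_part x) = 1 \<or> residue_char (unit_part x) = Legendre D P)"
proof (cases "val x \<le> 0")
  case True
  then show ?thesis using point_val_le_0[OF assms(1) _ assms(3,4)] by simp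
next
  case False
  then show ?thesis using point_val_ge_2[OF assms(1) _ assms(3)] assms(2,4) by simp
qed

text \<open>If v(x) = 1, then x - a = p (u - d0 A) with u the unit part of x.\<close>
definition shifted_unit :: "rat \<Rightarrow> rat" where
  "shifted_unit x = unit_part x - of_int (d0 * A)"

text \<open>If v(x) = 1, then v(x) + v((x - a)^2 - 4b) must be even, so (x - a)^2 - 4b vanishes to order 3.\<close>
lemma point_val_1_congruence:
  assumes x0: "x \<noteq> 0" and v1: "val x = 1" and y: "val_ge (y\<^sup>2 - isog_cubic x) K" and K: "K \<ge> 5"
  shows "val_ge ((shifted_unit x)\<^sup>2 - of_int (4 * d0^2 * B)) 1"
proof -
  define g where "g = (a\<^sup>2 - 4 * b) + x * (x - 2 * a)"
  have "val_ge x 1" using v1 x0 by (simp add: val_ge_def)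
  then have "val_ge (x - 2 * a) 1" using val_ge_diff val_ge_2a by blast
  then have t: "val_ge (x * (x - 2 * a)) (1 + 1)" using val_ge_mult \<open>val_ge x 1\<close> by blast
  have "val_ge (a\<^sup>2 - 4 * b) 2" using isog_disc_unit by (simp add: val_ge_def)
  then have g2: "val_ge g 2" unfolding g_def using val_ge_add t by simp
  have g3: "val_ge g 3"
  proof (rule ccontr)
    assume n3: "\<not> val_ge g 3"
    then have g0: "g \<noteq> 0" "val g = 2" using g2 by (auto simp: val_ge_def)
    have f0: "isog_cubic x \<noteq> 0" "val (isog_cubic x) = 3" using isog_cubic_eq_disc g0 x0 v1 val_mult unfolding g_def by auto
    have "K \<ge> val (isog_cubic x) + 1" using f0 K by simp
    note sc = approx_square_trivial_class[OF f0(1) y this]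
    then show False using f0 by simp
  qed
  have xd: "x = unit_part x * ppow 1" using unit_part_decomp[of x] v1 by simp
  have p21: "ppow 2 = ppow 1 * ppow 1" using ppow_add[of 1 1] by simp
  have "g = (x - a)\<^sup>2 - 4 * b" unfolding g_def by (simp add: power2_eq_square algebra_simps)
  also have "\<dots> = ((shifted_unit x)\<^sup>2 - of_int (4 * d0^2 * B)) * ppow 2"
    unfolding shifted_unit_def using xd a_eq b_eq p21
    by (simp add: power2_eq_square algebra_simps)
  finally have "val_ge (((shifted_unit x)\<^sup>2 - of_int (4 * d0^2 * B)) * ppow 2) 3" using g3 by simp
  then show ?thesis using val_ge_mult_ppow by simp
qed

lemma val_ge_shifted_unit: "x \<noteq> 0 \<Longrightarrow> val_ge (shifted_unit x) 0"
  unfolding shifted_unit_def using val_ge_diff[OF val_ge_unit_part val_ge_of_int] by blast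

lemma not_dvd_4d0B: "\<not> P dvd 4 * d0^2 * B"
  using not_dvd_mult[OF not_dvd_mult[OF not_dvd_4 not_dvd_power[OF d0_unit]] B_unit] .

text \<open>Otherwise 4 d0^2 B would be congruent to a square mod p.\<close>
lemma point_val_1_impossible:
  assumes x0: "x \<noteq> 0" and v1: "val x = 1" and y: "val_ge (y\<^sup>2 - isog_cubic x) K" and K: "K \<ge> 5"
    and LB: "Legendre B P = -1"
  shows False
proof -
  note core = point_val_1_congruence[OF x0 v1 y K]
  define w where "w = shifted_unit x"
  define c where "c = (of_int (4 * d0^2 * B) :: rat)"
  note cu = of_int_unit[OF not_dvd_4d0B]
  have Lc: "Legendre (4 * d0^2 * B) P = Legendre B P"
  proof -
    have "Legendre (4 * d0^2 * B) P = Legendre ((2 * d0)^2 * B) P" by (simp add: power_mult_distrib)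
    also have "\<dots> = Legendre B P" using Legendre_mult Legendre_square[OF not_dvd_mult[OF not_dvd_2 d0_unit]] by simp
    finally show ?thesis .
  qed
  show False
  proof (cases "val_ge w 1")
    case True
    then have "val_ge (w * w) (1 + 1)" using val_ge_mult by blast
    then have "val_ge (w\<^sup>2) 1" using val_ge_mono[of "w*w" 2 1] by (simp add: power2_eq_square)
    moreover have "val_ge (w\<^sup>2 - c) 1" using core unfolding w_def c_def .
    ultimately have "val_ge (w\<^sup>2 - (w\<^sup>2 - c)) 1" by (rule val_ge_diff)
    then have "val_ge c 1" by simp
    then show False using cu unfolding c_def by (simp add: val_ge_def)
  next
    case False
    have "val_ge w 0" unfolding w_def using val_ge_shifted_unit[OF x0] .
    then have w: "w \<noteq> 0" "val w = 0" using False by (auto simp: val_ge_def)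
    have ww: "w * w \<noteq> 0" "val (w * w) = 0" using w val_mult by auto
    have "val_ge (w * w - c) 1" using core unfolding w_def c_def by (simp add: power2_eq_square)
    then have "residue_char (w * w) = residue_char c"
      using residue_char_cong[OF ww(1,2) cu(1,2)] unfolding c_def by blast
    moreover have "residue_char (w * w) = 1" using residue_char_square w by blast
    moreover have "residue_char c = -1" using cu Lc LB unfolding c_def by simp
    ultimately show False by simp
  qed
qed


lemma sqrt_B_unit: assumes "val_ge (\<sigma>\<^sup>2 - of_int B) 1" shows "\<sigma> \<noteq> 0" "val \<sigma> = 0"
proof -
  note bu = of_int_unit[OF B_unit]
  have "val_ge (\<sigma>\<^sup>2 - of_int B) (val (of_int B) + 1)" using assms bu by simp
  note c = close_imp_same_residue[OF bu(1) this]
  then show s0: "\<sigma> \<noteq> 0" by simp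
  have "val (\<sigma>\<^sup>2) = 2 * val \<sigma>" using val_power[OF s0, of 2] by simp
  then show "val \<sigma> = 0" using c bu by simp
qed

text \<open>For sigma approximately sqrt B, the unit parts of d (A + 2 sigma) and d (A - 2 sigma), the roots of
  x^2 - 2a x + a^2 - 4b.\<close>
definition tors_plus :: "rat \<Rightarrow> rat" where
  "tors_plus \<sigma> = of_int d0 * (of_int A + 2 * \<sigma>)"

definition tors_minus :: "rat \<Rightarrow> rat" where
  "tors_minus \<sigma> = of_int d0 * (of_int A - 2 * \<sigma>)"

lemma val_ge_2_unit: "val s = 0 \<Longrightarrow> val_ge (2 * s) 0"
proof -
  assume "val s = 0"
  then have "val_ge s 0" by (simp add: val_ge_def)
  moreover have "2 * s = s + s" by simp
  ultimately show ?thesis using val_ge_add by metis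
qed

lemma tors_units: assumes sg: "val_ge (\<sigma>\<^sup>2 - of_int B) 1"
  shows "tors_plus \<sigma> \<noteq> 0" "val (tors_plus \<sigma>) = 0" "tors_minus \<sigma> \<noteq> 0" "val (tors_minus \<sigma>) = 0" "residue_char (tors_plus \<sigma>) * residue_char (tors_minus \<sigma>) = Legendre D P"
proof -
  note su = sqrt_B_unit[OF sg]
  have cw: "\<not> P dvd d0^2 * D" using not_dvd_mult not_dvd_power d0_unit D_unit by blast
  note cu = of_int_unit[OF cw]
  define c0 where "c0 = (of_int (d0^2 * D) :: rat)"
  have e: "tors_plus \<sigma> * tors_minus \<sigma> - c0 = of_int (- 4 * d0^2) * (\<sigma>\<^sup>2 - of_int B)"
    unfolding tors_plus_def tors_minus_def c0_def by (simp add: power2_eq_square algebra_simps)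
  have "val_ge (of_int (- 4 * d0^2) * (\<sigma>\<^sup>2 - of_int B)) (0 + 1)" using val_ge_mult[OF val_ge_of_int sg] .
  then have "val_ge (tors_plus \<sigma> * tors_minus \<sigma> - c0) (val c0 + 1)" using e cu unfolding c0_def by simp
  note c = close_imp_same_residue[OF cu(1)[folded c0_def] this]
  have pr0: "tors_plus \<sigma> * tors_minus \<sigma> \<noteq> 0" "val (tors_plus \<sigma> * tors_minus \<sigma>) = 0" using c cu unfolding c0_def by auto
  then show t0: "tors_plus \<sigma> \<noteq> 0" "tors_minus \<sigma> \<noteq> 0" by auto
  have "val_ge (of_int A + 2 * \<sigma>) 0" using val_ge_add[OF val_ge_of_int val_ge_2_unit[OF su(2)]] .
  then have "val_ge (tors_plus \<sigma>) (0 + 0)" unfolding tors_plus_def using val_ge_mult[OF val_ge_of_int] by blast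
  then have g1: "val (tors_plus \<sigma>) \<ge> 0" using t0 by (simp add: val_ge_def)
  have "val_ge (of_int A - 2 * \<sigma>) 0" using val_ge_diff[OF val_ge_of_int val_ge_2_unit[OF su(2)]] .
  then have "val_ge (tors_minus \<sigma>) (0 + 0)" unfolding tors_minus_def using val_ge_mult[OF val_ge_of_int] by blast
  then have g2: "val (tors_minus \<sigma>) \<ge> 0" using t0 by (simp add: val_ge_def)
  have "val (tors_plus \<sigma>) + val (tors_minus \<sigma>) = 0" using pr0 val_mult[OF t0] by simp
  then show v0: "val (tors_plus \<sigma>) = 0" "val (tors_minus \<sigma>) = 0" using g1 g2 by auto
  have "residue_char (unit_part (tors_plus \<sigma> * tors_minus \<sigma>)) = residue_char (unit_part c0)" using c by simp
  then have "residue_char (tors_plus \<sigma> * tors_minus \<sigma>) = residue_char c0" using unit_part_val_0 pr0 cu unfolding c0_def by simp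
  also have "\<dots> = Legendre D P" unfolding c0_def using cu Legendre_d0_sq_D by simp
  finally show "residue_char (tors_plus \<sigma>) * residue_char (tors_minus \<sigma>) = Legendre D P" using residue_char_mult[OF t0(1) v0(1) t0(2) v0(2)] by simp
qed

text \<open>By the congruence, the unit part of x is d0 (A + 2 sigma) or d0 (A - 2 sigma) mod p; the two
  have the same residue character when (D/p) = 1.\<close>
lemma point_val_1_residue:
  assumes x0: "x \<noteq> 0" and v1: "val x = 1" and y: "val_ge (y\<^sup>2 - isog_cubic x) K" and K: "K \<ge> 5"
    and LD: "Legendre D P = 1" and sg: "val_ge (\<sigma>\<^sup>2 - of_int B) 1"
  shows "residue_char (unit_part x) = residue_char (tors_plus \<sigma>)"
proof -
  note tt = tors_units[OF sg]
  define w where "w = shifted_unit x"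
  define t where "t = 2 * of_int d0 * \<sigma>"
  have "val_ge \<sigma> 0" using sqrt_B_unit[OF sg] by (simp add: val_ge_def)
  then have t0: "val_ge t 0" unfolding t_def using val_ge_mult[OF val_ge_of_int[of "2 * d0"]] by simp
  have "(w - t) * (w + t) = (w\<^sup>2 - of_int (4 * d0^2 * B)) - of_int (4 * d0^2) * (\<sigma>\<^sup>2 - of_int B)"
    unfolding t_def by (simp add: power2_eq_square algebra_simps)
  moreover have "val_ge (of_int (4 * d0^2) * (\<sigma>\<^sup>2 - of_int B)) (0 + 1)"
    using val_ge_mult[OF val_ge_of_int sg] .
  ultimately have "val_ge ((w - t) * (w + t)) 1"
    using val_ge_diff point_val_1_congruence[OF x0 v1 y K] unfolding w_def by simp
  moreover have "val_ge w 0" unfolding w_def using val_ge_shifted_unit[OF x0] .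
  ultimately have "val_ge (w - t) 1 \<or> val_ge (w + t) 1"
    using val_ge_1_mult_cases val_ge_diff[OF _ t0] val_ge_add[OF _ t0] by blast
  moreover have "unit_part x - tors_plus \<sigma> = w - t" "unit_part x - tors_minus \<sigma> = w + t"
    unfolding w_def t_def shifted_unit_def tors_plus_def tors_minus_def by (simp_all add: algebra_simps)
  ultimately have "residue_char (unit_part x) = residue_char (tors_plus \<sigma>) \<or>
      residue_char (unit_part x) = residue_char (tors_minus \<sigma>)"
    using residue_char_cong[OF unit_part_nonzero[OF x0] val_unit_part[OF x0]] tt by metis
  moreover have "residue_char (tors_plus \<sigma>) = residue_char (tors_minus \<sigma>)"
    using tt(5) LD residue_char_pm[OF tt(1,2)] by auto
  ultimately show ?thesis by auto
qed

lemma tors_point_val: assumes sg: "val_ge (\<sigma>\<^sup>2 - of_int B) 1"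
  shows "of_int (int p * d0) * (of_int A + 2 * \<sigma>) \<noteq> 0" "val (of_int (int p * d0) * (of_int A + 2 * \<sigma>)) = 1"
    "unit_part (of_int (int p * d0) * (of_int A + 2 * \<sigma>)) = tors_plus \<sigma>"
proof -
  note tt = tors_units[OF sg]
  have e: "of_int (int p * d0) * (of_int A + 2 * \<sigma>) = tors_plus \<sigma> * ppow 1" unfolding tors_plus_def ppow_1 by simp
  show "of_int (int p * d0) * (of_int A + 2 * \<sigma>) \<noteq> 0" "val (of_int (int p * d0) * (of_int A + 2 * \<sigma>)) = 1"
    "unit_part (of_int (int p * d0) * (of_int A + 2 * \<sigma>)) = tors_plus \<sigma>" unfolding e using unit_part_mult_ppow[OF tt(1,2)] by auto
qed


subsection \<open>Square classes in the Kummer image\<close>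

lemma square_class_isog_disc: "square_class (Qp_const (a\<^sup>2 - 4 * b)) True (Legendre D P)"
  using square_class_const[of "a\<^sup>2 - 4 * b"] isog_disc_unit by simp

lemma point_eventually:
  assumes pt: "(X, Y) \<in> Qp_affine_points p (-2 * a) (a\<^sup>2 - 4 * b)" and nn: "\<not> padic_null p X"
  shows "\<forall>\<^sub>F n in sequentially. X n \<noteq> 0 \<and> val_ge ((Y n)\<^sup>2 - isog_cubic (X n)) (3 * \<bar>val (X n)\<bar> + 5)"
proof -
  have X: "is_cauchy X" "\<not> is_null X" and eq: "is_null (\<lambda>n. (Y n)\<^sup>2 - isog_cubic (X n))"
    using pt nn unfolding Qp_affine_points_def isog_cubic_def by (auto simp: padic_cauchy_iff padic_null_iff Qp_eq_iff)
  obtain k where "\<forall>\<^sub>F n in sequentially. X n \<noteq> 0 \<and> val (X n) = k"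
    using unit_val_eventually_const[OF X] .
  moreover have "\<forall>\<^sub>F n in sequentially. val_ge ((Y n)\<^sup>2 - isog_cubic (X n)) (3 * \<bar>k\<bar> + 5)"
    using eq unfolding is_null_def by blast
  ultimately show ?thesis by eventually_elim auto
qed

lemma point_square_class_B_nonsquare:
  assumes pt: "(X, Y) \<in> Qp_affine_points p (-2 * a) (a\<^sup>2 - 4 * b)" and nn: "\<not> padic_null p X"
    and LB: "Legendre B P = -1" and cX: "square_class X e c"
  shows "e \<and> (c = 1 \<or> c = Legendre D P)"
proof -
  obtain n where n: "X n \<noteq> 0" "val_ge ((Y n)\<^sup>2 - isog_cubic (X n)) (3 * \<bar>val (X n)\<bar> + 5)"
    "even (val (X n)) \<longleftrightarrow> e" "residue_char (unit_part (X n)) = c"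
    using eventually_happens'[OF sequentially_bot eventually_conj[OF point_eventually[OF pt nn]
        cX[unfolded square_class_def]]] by blast
  have "val (X n) \<noteq> 1" using point_val_1_impossible[OF n(1) _ n(2) _ LB] by force
  then show ?thesis using point_val_ne_1[OF n(1) _ n(2)] n(3,4) by force
qed

text \<open>For s a square root of B, tors_point s is the x-coordinate d (A + 2 sqrt B) of a 2-torsion point
  of E'^d other than (0, 0).\<close>
definition tors_point :: "(nat \<Rightarrow> rat) \<Rightarrow> nat \<Rightarrow> rat" where
  "tors_point s n = of_int (P * d0) * (of_int A + 2 * s n)"

lemma tors_point_eventually:
  assumes "is_null (\<lambda>n. (s n)\<^sup>2 - of_int B)"
  shows "\<forall>\<^sub>F n in sequentially. val_ge ((s n)\<^sup>2 - of_int B) 1 \<and> tors_point s n \<noteq> 0 \<and>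
           val (tors_point s n) = 1 \<and> unit_part (tors_point s n) = tors_plus (s n)"
proof -
  have "\<forall>\<^sub>F n in sequentially. val_ge ((s n)\<^sup>2 - of_int B) 1" using assms unfolding is_null_def by blast
  then show ?thesis by eventually_elim (use tors_point_val in \<open>auto simp: tors_point_def\<close>)
qed

lemma tors_point_unit:
  assumes cs: "is_cauchy s" and ns: "is_null (\<lambda>n. (s n)\<^sup>2 - of_int B)"
  shows "tors_point s \<in> Qp_units p"
proof -
  have "is_cauchy (tors_point s)"
    unfolding tors_point_def using cauchy_mult[OF cauchy_const cauchy_add[OF cauchy_const cauchy_mult[OF cauchy_const cs]]] .
  moreover have "\<forall>\<^sub>F n in sequentially. tors_point s n \<noteq> 0 \<and> val (tors_point s n) = 1"
    using tors_point_eventually[OF ns] by eventually_elim simp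
  then have "\<not> is_null (tors_point s)" by (rule not_null_eventually_val)
  ultimately show ?thesis using Qp_units_iff by simp
qed

lemma tors_point_square_class:
  assumes "is_null (\<lambda>n. (s n)\<^sup>2 - of_int B)" and "square_class (tors_point s) e c"
  shows "\<not> e" "\<forall>\<^sub>F n in sequentially. val_ge ((s n)\<^sup>2 - of_int B) 1 \<and> residue_char (tors_plus (s n)) = c"
proof -
  have ev: "\<forall>\<^sub>F n in sequentially. \<not> e \<and> val_ge ((s n)\<^sup>2 - of_int B) 1 \<and> residue_char (tors_plus (s n)) = c"
    using tors_point_eventually[OF assms(1)] assms(2) unfolding square_class_def by eventually_elim auto
  then show "\<not> e" using eventually_happens'[OF sequentially_bot] by blast
  show "\<forall>\<^sub>F n in sequentially. val_ge ((s n)\<^sup>2 - of_int B) 1 \<and> residue_char (tors_plus (s n)) = c"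
    using ev by eventually_elim simp
qed

lemma tors_point_on_curve:
  assumes cs: "is_cauchy s" and ns: "is_null (\<lambda>n. (s n)\<^sup>2 - of_int B)"
  shows "(tors_point s, \<lambda>n. 0) \<in> Qp_affine_points p (-2 * a) (a\<^sup>2 - 4 * b)" "\<not> padic_null p (tors_point s)"
proof -
  have T: "is_cauchy (tors_point s)" "\<not> is_null (tors_point s)" using tors_point_unit[OF assms] Qp_units_iff by auto
  then show "\<not> padic_null p (tors_point s)" using padic_null_iff by simp
  define cc where "cc = (of_int (4 * (P * d0)^2) :: rat)"
  have e: "0\<^sup>2 - isog_cubic (tors_point s n) = - (((s n)\<^sup>2 - of_int B) * (tors_point s n * cc))" for n
  proof -
    have "tors_point s n - a = of_int (P * d0) * (2 * s n)" unfolding tors_point_def a_def by (simp add: algebra_simps)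
    then have "(tors_point s n - a)\<^sup>2 - 4 * b = cc * ((s n)\<^sup>2 - of_int B)"
      unfolding b_def cc_def by (simp add: power2_eq_square algebra_simps)
    then show ?thesis unfolding isog_cubic_eq_shifted by (simp add: ac_simps)
  qed
  have "is_null (\<lambda>n. - (((s n)\<^sup>2 - of_int B) * (tors_point s n * cc)))"
    using null_uminus[OF null_mult_bounded[OF ns bounded_mult[OF cauchy_bounded[OF T(1)] bounded_const]]] .
  then have "Qp_eq p (\<lambda>n. ((\<lambda>n. 0::rat) n)\<^sup>2)
      (\<lambda>n. (tors_point s n)^3 + (-2 * a) * (tors_point s n)\<^sup>2 + (a\<^sup>2 - 4 * b) * tors_point s n)"
    unfolding Qp_eq_iff isog_cubic_def[symmetric] e .
  moreover have "padic_cauchy p (tors_point s)" "padic_cauchy p (\<lambda>n. 0)"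
    using T(1) cauchy_const[of 0] padic_cauchy_iff by auto
  ultimately show "(tors_point s, \<lambda>n. 0) \<in> Qp_affine_points p (-2 * a) (a\<^sup>2 - 4 * b)"
    unfolding Qp_affine_points_def by simp
qed

lemma point_square_class_B_square:
  assumes pt: "(X, Y) \<in> Qp_affine_points p (-2 * a) (a\<^sup>2 - 4 * b)" and nn: "\<not> padic_null p X"
    and LD: "Legendre D P = 1" and cs: "is_cauchy s" and ns: "is_null (\<lambda>n. (s n)\<^sup>2 - of_int B)"
    and cX: "square_class X e c"
  shows "(e \<and> c = 1) \<or> square_class (tors_point s) e c"
proof -
  obtain e' c' where cT: "square_class (tors_point s) e' c'"
    using unit_square_class[OF tors_point_unit[OF cs ns]] .
  obtain n where n: "X n \<noteq> 0" "val_ge ((Y n)\<^sup>2 - isog_cubic (X n)) (3 * \<bar>val (X n)\<bar> + 5)"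
    "even (val (X n)) \<longleftrightarrow> e" "residue_char (unit_part (X n)) = c"
    "val_ge ((s n)\<^sup>2 - of_int B) 1" "residue_char (tors_plus (s n)) = c'"
    using eventually_happens'[OF sequentially_bot eventually_conj[OF eventually_conj[OF point_eventually[OF pt nn]
        cX[unfolded square_class_def]] tors_point_square_class(2)[OF ns cT]]] by blast
  show ?thesis
  proof (cases "val (X n) = 1")
    case True
    then have "c = c'" "\<not> e" using point_val_1_residue[OF n(1) True n(2) _ LD n(5)] n(3,4,6) by auto
    then show ?thesis using cT tors_point_square_class(1)[OF ns cT] by simp
  next
    case False
    then show ?thesis using point_val_ne_1[OF n(1) False n(2)] n(3,4) LD by auto
  qed
qed

lemma kummer_image_iff_square_class:
  assumes z: "z \<in> Qp_units p" and cz: "square_class z e c"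
  shows "z \<in> kummer_image p a b \<longleftrightarrow> (e \<and> c = 1) \<or> (e \<and> c = Legendre D P) \<or>
    (\<exists>X Y. (X, Y) \<in> Qp_affine_points p (-2 * a) (a\<^sup>2 - 4 * b) \<and> \<not> padic_null p X \<and> square_class X e c)"
proof -
  have units: "Qp_const 1 \<in> Qp_units p" "Qp_const (a\<^sup>2 - 4 * b) \<in> Qp_units p"
    using Qp_const_unit isog_disc_unit by auto
  have "sq_equiv p z X \<longleftrightarrow> square_class X e c" if "X \<in> Qp_units p" for X
    using sq_equiv_iff_square_class[OF z that cz] .
  moreover have "X \<in> Qp_units p" if "(X, Y) \<in> Qp_affine_points p (-2 * a) (a\<^sup>2 - 4 * b)" "\<not> padic_null p X" for X Y
    using that unfolding Qp_affine_points_def Qp_units_def by auto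
  moreover note square_class_1_iff
  moreover have "square_class (Qp_const (a\<^sup>2 - 4 * b)) e c \<longleftrightarrow> e \<and> c = Legendre D P"
    using square_class_unique[OF square_class_isog_disc, of e c] square_class_isog_disc by auto
  ultimately show ?thesis using z units unfolding kummer_image_def by blast
qed


lemma kummer_image_eqI:
  assumes "S \<subseteq> Qp_units p"
    and "\<And>z e c. z \<in> Qp_units p \<Longrightarrow> square_class z e c \<Longrightarrow> z \<in> kummer_image p a b \<longleftrightarrow> z \<in> S"
  shows "kummer_image p a b = S"
proof (rule equalityI; rule subsetI)
  fix z assume "z \<in> kummer_image p a b"
  then have "z \<in> Qp_units p" unfolding kummer_image_def by blast
  then show "z \<in> S" using assms(2) unit_square_class \<open>z \<in> kummer_image p a b\<close> by metis
next
  fix z assume "z \<in> S"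
  then have "z \<in> Qp_units p" using assms(1) by blast
  then show "z \<in> kummer_image p a b" using assms(2) unit_square_class \<open>z \<in> S\<close> by metis
qed

lemma kummer_image_type1:
  assumes LD: "Legendre D P = 1" and cs: "padic_cauchy p s" and sB: "Qp_eq p (\<lambda>n. (s n)\<^sup>2) (Qp_const (of_int B))"
  shows "kummer_image p a b = {z \<in> Qp_units p. sq_equiv p z (Qp_const 1) \<or> sq_equiv p z (tors_point s)}"
proof (rule kummer_image_eqI)
  fix z e c assume z: "z \<in> Qp_units p" and cz: "square_class z e c"
  have cs: "is_cauchy s" and ns: "is_null (\<lambda>n. (s n)\<^sup>2 - of_int B)"
    using cs sB padic_cauchy_iff Qp_eq_iff unfolding Qp_const_def by auto
  note T = tors_point_unit[OF cs ns]
  have "z \<in> kummer_image p a b \<longleftrightarrow> (e \<and> c = 1) \<or> square_class (tors_point s) e c"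
    unfolding kummer_image_iff_square_class[OF z cz]
    using LD point_square_class_B_square[OF _ _ LD cs ns] tors_point_on_curve[OF cs ns] by blast
  also have "\<dots> \<longleftrightarrow> sq_equiv p z (Qp_const 1) \<or> sq_equiv p z (tors_point s)"
    using sq_equiv_iff_square_class[OF z Qp_const_unit[of 1] cz] sq_equiv_iff_square_class[OF z T cz]
      square_class_1_iff by simp
  finally show "z \<in> kummer_image p a b \<longleftrightarrow> z \<in> {z \<in> Qp_units p. sq_equiv p z (Qp_const 1) \<or> sq_equiv p z (tors_point s)}"
    using z by simp
qed blast

lemma kummer_image_type2:
  assumes LD: "Legendre D P = 1" and LB: "Legendre B P = -1"
  shows "kummer_image p a b = {z \<in> Qp_units p. sq_equiv p z (Qp_const 1)}"
proof (rule kummer_image_eqI)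
  fix z e c assume z: "z \<in> Qp_units p" and cz: "square_class z e c"
  have "z \<in> kummer_image p a b \<longleftrightarrow> e \<and> c = 1"
    unfolding kummer_image_iff_square_class[OF z cz] using point_square_class_B_nonsquare[OF _ _ LB] LD by auto
  also have "\<dots> \<longleftrightarrow> sq_equiv p z (Qp_const 1)"
    using sq_equiv_iff_square_class[OF z Qp_const_unit cz] square_class_1_iff by simp
  finally show "z \<in> kummer_image p a b \<longleftrightarrow> z \<in> {z \<in> Qp_units p. sq_equiv p z (Qp_const 1)}"
    using z by simp
qed blast

lemma sqrt_B_exists:
  assumes LB: "Legendre B P = 1"
  obtains s where "is_cauchy s" "is_null (\<lambda>n. (s n)\<^sup>2 - of_int B)"
proof -
  have "square_class (Qp_const (of_int B)) True 1" using square_class_of_int[OF B_unit] LB by simp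
  then have "sq_equiv p (Qp_const (of_int B)) (Qp_const 1)"
    using same_square_class_imp_sq_equiv[OF Qp_const_unit Qp_const_unit _ square_class_1]
      of_int_unit[OF B_unit] by simp
  then obtain Z where "Z \<in> Qp_units p" "Qp_eq p (Qp_const (of_int B)) (\<lambda>n. Qp_const 1 n * (Z n)\<^sup>2)"
    unfolding sq_equiv_def by blast
  then have "is_cauchy Z" "is_null (\<lambda>n. (Z n)\<^sup>2 - of_int B)"
    using null_uminus[of "\<lambda>n. of_int B - (Z n)\<^sup>2"] Qp_units_iff Qp_eq_iff unfolding Qp_const_def by auto
  then show ?thesis by (rule that)
qed

lemma tors_point_classes_product:
  assumes ns: "is_null (\<lambda>n. (s n)\<^sup>2 - of_int B)"
    and c1: "square_class (tors_point s) e1 c1" and c2: "square_class (tors_point (\<lambda>n. - s n)) e2 c2"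
  shows "c1 * c2 = Legendre D P"
proof -
  have ns': "is_null (\<lambda>n. (- s n)\<^sup>2 - of_int B)" using ns by simp
  obtain n where "val_ge ((s n)\<^sup>2 - of_int B) 1" "residue_char (tors_plus (s n)) = c1"
    "residue_char (tors_plus (- s n)) = c2"
    using eventually_happens'[OF sequentially_bot eventually_conj[OF tors_point_square_class(2)[OF ns c1]
        tors_point_square_class(2)[OF ns' c2]]] by auto
  moreover have "tors_plus (- s n) = tors_minus (s n)" unfolding tors_plus_def tors_minus_def by simp
  ultimately show ?thesis using tors_units(5) by metis
qed

lemma kummer_image_type3:
  assumes LD: "Legendre D P = -1" and LB: "Legendre B P = 1"
  shows "kummer_image p a b = Qp_units p"
proof (rule kummer_image_eqI)
  fix z e c assume z: "z \<in> Qp_units p" and cz: "square_class z e c"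
  obtain s where cs: "is_cauchy s" and ns: "is_null (\<lambda>n. (s n)\<^sup>2 - of_int B)" using sqrt_B_exists[OF LB] .
  have cs': "is_cauchy (\<lambda>n. - s n)" and ns': "is_null (\<lambda>n. (- s n)\<^sup>2 - of_int B)"
    using cauchy_uminus[OF cs] ns by auto
  obtain e1 c1 where c1: "square_class (tors_point s) e1 c1"
    using unit_square_class[OF tors_point_unit[OF cs ns]] .
  obtain e2 c2 where c2: "square_class (tors_point (\<lambda>n. - s n)) e2 c2"
    using unit_square_class[OF tors_point_unit[OF cs' ns']] .
  have "c1 * c2 = -1" using tors_point_classes_product[OF ns c1 c2] LD by simp
  then have "c = c1 \<or> c = c2" using square_class_pm[OF c1] square_class_pm[OF c2] square_class_pm[OF cz] by auto
  moreover have "\<not> e1" "\<not> e2" using tors_point_square_class(1)[OF ns c1] tors_point_square_class(1)[OF ns' c2] by auto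
  ultimately have "\<not> e \<Longrightarrow> square_class (tors_point s) e c \<or> square_class (tors_point (\<lambda>n. - s n)) e c"
    using c1 c2 by auto
  then have "\<not> e \<Longrightarrow> \<exists>X Y. (X, Y) \<in> Qp_affine_points p (-2 * a) (a\<^sup>2 - 4 * b) \<and> \<not> padic_null p X \<and> square_class X e c"
    using tors_point_on_curve[OF cs ns] tors_point_on_curve[OF cs' ns'] by blast
  then show "z \<in> kummer_image p a b \<longleftrightarrow> z \<in> Qp_units p"
    unfolding kummer_image_iff_square_class[OF z cz] using z square_class_pm[OF cz] LD by (cases e) auto
qed simp

lemma kummer_image_type4:
  assumes LD: "Legendre D P = -1" and LB: "Legendre B P = -1"
  shows "kummer_image p a b = {z \<in> Qp_units p. \<exists>w \<in> Zp_units p. sq_equiv p z w}"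
proof (rule kummer_image_eqI)
  fix z e c assume z: "z \<in> Qp_units p" and cz: "square_class z e c"
  have "z \<in> kummer_image p a b \<longleftrightarrow> e"
    unfolding kummer_image_iff_square_class[OF z cz]
    using point_square_class_B_nonsquare[OF _ _ LB] square_class_pm[OF cz] LD by auto
  also have "\<dots> \<longleftrightarrow> (\<exists>w \<in> Zp_units p. sq_equiv p z w)"
  proof
    assume e
    have "Qp_const 1 \<in> Zp_units p" "Qp_const (of_int D) \<in> Zp_units p"
      using Qp_const_Zp_unit[of 1] Qp_const_Zp_unit[OF D_unit] P_gt_2 by auto
    moreover have "sq_equiv p z (Qp_const 1) \<or> sq_equiv p z (Qp_const (of_int D))"
    proof (cases "c = 1")
      case True
      then show ?thesis using sq_equiv_iff_square_class[OF z Qp_const_unit[of 1] cz] square_class_1 \<open>e\<close> by simp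
    next
      case False
      then have "square_class (Qp_const (of_int D)) e c"
        using square_class_of_int[OF D_unit] LD square_class_pm[OF cz] \<open>e\<close> by auto
      then show ?thesis using sq_equiv_iff_square_class[OF z Qp_const_unit cz] of_int_unit[OF D_unit] by simp
    qed
    ultimately show "\<exists>w \<in> Zp_units p. sq_equiv p z w" by blast
  next
    assume "\<exists>w \<in> Zp_units p. sq_equiv p z w"
    then obtain w c' where "sq_equiv p z w" "square_class w True c'" using Zp_unit_square_class(2) by blast
    then show e using square_class_unique[OF cz sq_equiv_square_class, of w True c'] by simp
  qed
  finally show "z \<in> kummer_image p a b \<longleftrightarrow> z \<in> {z \<in> Qp_units p. \<exists>w \<in> Zp_units p. sq_equiv p z w}"
    using z by simp
qed blast


lemma Legendre_disc: "Legendre (disc A B) P = Legendre D P"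
proof -
  have "disc A B = (4 * B)\<^sup>2 * D" unfolding disc_def by (simp add: power2_eq_square algebra_simps)
  then show ?thesis using Legendre_mult Legendre_square[OF not_dvd_mult[OF not_dvd_4 B_unit]] by simp
qed

lemma Legendre_isog_disc: "Legendre (disc (-2 * A) (A\<^sup>2 - 4 * B)) P = Legendre B P"
proof -
  have "disc (-2 * A) (A\<^sup>2 - 4 * B) = (16 * D)\<^sup>2 * B" unfolding disc_def by (simp add: power2_eq_square algebra_simps)
  moreover have "\<not> P dvd 16 * D" using not_dvd_mult[OF not_dvd_2_power[of 4] D_unit] by simp
  ultimately show ?thesis using Legendre_mult Legendre_square by simp
qed

lemma W_eq_kummer_image: "W A B (P * d0) p = kummer_image p a b"
  unfolding W_def a_def b_def by simp

lemma tors_point_eq: "(\<lambda>n. of_int (P * d0) * (of_int A + 2 * s n)) = tors_point s"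
  unfolding tors_point_def by simp

end

lemma twist_at_p_of_hyps:
  assumes pr: "prime p" and sqf: "squarefree d" and pd: "int p dvd d" and cop: "coprime (int p) (2 * disc A B)"
  obtains d0 where "d = int p * d0" "twist_at_p p A B d0"
proof -
  have unit: "\<not> is_unit (int p)" using pr prime_ge_2_nat[OF pr] by simp
  have ndvd: "\<not> int p dvd x" if "x dvd 2 * disc A B" for x
  proof
    assume "int p dvd x"
    then have "int p dvd 2 * disc A B" using that by (rule dvd_trans)
    then show False using coprime_common_divisor[OF cop dvd_refl] unit by blast
  qed
  have "\<not> int p dvd 2" "\<not> int p dvd B" "\<not> int p dvd (A\<^sup>2 - 4 * B)"
    by (rule ndvd; simp add: disc_def power2_eq_square)+
  moreover have "p > 2" using \<open>\<not> int p dvd 2\<close> prime_ge_2_nat[OF pr] by (cases "p = 2") auto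
  moreover obtain d0 where d0: "d = int p * d0" using pd by (auto elim: dvdE)
  moreover have "\<not> int p dvd d0"
  proof
    assume "int p dvd d0"
    then have "(int p)\<^sup>2 dvd d" unfolding d0 power2_eq_square by (rule mult_dvd_mono[OF dvd_refl])
    then show False using sqf unit unfolding squarefree_def by blast
  qed
  ultimately have "twist_at_p p A B d0" using pr by unfold_locales auto
  with d0 show ?thesis by (rule that)
qed

theorem corollary3p4:
  fixes A B d :: int and p :: nat
  assumes nonsing: "disc A B \<noteq> 0"
    and tors: "{x :: rat. x ^ 3 + of_int A * x\<^sup>2 + of_int B * x = 0} = {0}"
    and sqf: "squarefree d"
    and pr: "prime p" and pd: "int p dvd d" and cop: "coprime (int p) (2 * disc A B)"
  shows
    "(Legendre (disc A B) (int p) = 1 \<and> Legendre (disc (-2 * A) (A\<^sup>2 - 4 * B)) (int p) = 1 \<longrightarrow>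
        (\<forall>s. padic_cauchy p s \<and> Qp_eq p (\<lambda>n. (s n)\<^sup>2) (Qp_const (of_int B)) \<longrightarrow>
           W A B d p = {u \<in> Qp_units p. sq_equiv p u (Qp_const 1)
                 \<or> sq_equiv p u (\<lambda>n. of_int d * (of_int A + 2 * s n))}))
   \<and> (Legendre (disc A B) (int p) = 1 \<and> Legendre (disc (-2 * A) (A\<^sup>2 - 4 * B)) (int p) = -1 \<longrightarrow>
        W A B d p = {u \<in> Qp_units p. sq_equiv p u (Qp_const 1)})
   \<and> (Legendre (disc A B) (int p) = -1 \<and> Legendre (disc (-2 * A) (A\<^sup>2 - 4 * B)) (int p) = 1 \<longrightarrow>
        W A B d p = Qp_units p)
   \<and> (Legendre (disc A B) (int p) = -1 \<and> Legendre (disc (-2 * A) (A\<^sup>2 - 4 * B)) (int p) = -1 \<longrightarrow>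
        W A B d p = {u \<in> Qp_units p. \<exists>v \<in> Zp_units p. sq_equiv p u v})"
proof -
  obtain d0 where d: "d = int p * d0" and loc: "twist_at_p p A B d0"
    using twist_at_p_of_hyps[OF pr sqf pd cop] .
  interpret twist_at_p p A B d0 by (fact loc)
  show ?thesis
    unfolding d W_eq_kummer_image Legendre_disc Legendre_isog_disc tors_point_eq
    using kummer_image_type1 kummer_image_type2 kummer_image_type3 kummer_image_type4
    by (intro conjI impI allI) auto
qed

end
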